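(* Let $\mu$ be the segment process on $Y$ with density $p(x)=c_\nu^{-1}\exp(\nu_1L(U_x)+\nu_2N(U_x))$ with respect to $P_\eta$, where $\nu_1\in\mathbb R$ and $\nu_2\le0$. Then $$\mathbb EL(U_\mu)=\int_Y\mathbb E[\mathcal E_\mu(y)]\,l(y)\,\lambda(dy),\qquad \mathbb EN(U_\mu)=\tfrac12\int_{Y^2}\mathbb E[\mathcal E_\mu(y_1,y_2)]1_{[y_1\cap y_2\neq\emptyset]}\lambda(d(y_1,y_2)),$$ $$\mathbb E[L(U_\mu)^2]=\int_Y\mathbb E[\mathcal E_\mu(y)]l(y)^2\lambda(dy)+\int_{Y^2}\mathbb E[\mathcal E_\mu(y_1,y_2)]l(y_1)l(y_2)\lambda(d(y_1,y_2)),$$ $$\mathbb E[N(U_\mu)^2]=\tfrac12\int_{Y^2}\mathbb E[\mathcal E_\mu(y_1,y_2)]1_{[y_1\cap y_2\neq\emptyset]}\lambda(d(y_1,y_2))+\int_{Y^3}\mathbb E[\mathcal E_\mu(y_1,y_2,y_3)]1_{[y_1\cap y_2\neq\emptyset]}1_{[y_3\cap y_1\neq\emptyset]}\lambda(d(y_1,y_2,y_3))$$ $$+\tfrac14\int_{Y^4}\mathbb E[\mathcal E_\mu(y_1,\dots,y_4)]1_{[y_1\cap y_2\neq\emptyset]}1_{[y_3\cap y_4\neq\emptyset]}\lambda(d(y_1,\dots,y_4)).$$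
   Context: $B\subset\mathbb R^2$ is a bounded Borel set with positive area, $b>0$, $Y=B\times(0,b]\times[0,\pi)$; $y=(z,r,\phi)\in Y$ represents the closed line segment in $\mathbb R^2$ with centre $z$, length $r$ and axial orientation angle $\phi$; $l(y)=r$ is its length. $\eta$ is a Poisson process on $Y$ with intensity measure $\lambda(d(z,r,\phi))=\rho(z)\,dz\,Q(dr)\,V(d\phi)$, $\rho$ a bounded nonnegative function on $B$, $Q,V$ probability measures on $(0,b]$ and $[0,\pi)$, $V$ nondegenerate; $\lambda(d(y_1,\dots,y_n))$ denotes $\lambda^n$. For a finite configuration $x$ of segments, $L(U_x)=\sum_{s\in x}l(s)$ and $N(U_x)=\frac12\sum_{(s,t)\in x^2_{\neq}}1_{[s\cap t\neq\emptyset]}$ ($x^2_{\neq}$ = ordered pairs of distinct segments of $x$); $G(U_x)=(L(U_x),N(U_x))$, $\nu=(\nu_1,\nu_2)$, $c_\nu$ the normalizing constant. For $y,y_i\notin x$: $D_yG(U_x)=(l(y),\sum_{s\in x}1_{[s\cap y\neq\emptyset]})$, $D^2_{y_1y_2}G(U_x)=(0,1_{[y_1\cap y_2\neq\emptyset]})$. $\mathcal E_x(y_1,\dots,y_m)=\exp(\nu\cdot Q_m)$ with $Q_m=\sum_{i=1}^mD_{y_i}G(U_x)+\sum_{1\le i<j\le m}D^2_{y_iy_j}G(U_x)$, and $\mathcal E_\mu$ is this with $x=\mu$ (it equals the conditional intensity $p(\mu\cup\{y_1,\dots,y_m\})/p(\mu)$ a.s.). *)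

theory Defs
  imports "HOL-Probability.Probability"
begin

type_synonym segment = "(real \<times> real) \<times> real \<times> real"
  \<comment> \<open>(z, r, phi): centre z, length r, orientation angle phi\<close>

definition seg :: "segment \<Rightarrow> (real \<times> real) set" where
  "seg y = (case y of (z, r, \<phi>) \<Rightarrow>
     closed_segment (z - (r/2) *\<^sub>R (cos \<phi>, sin \<phi>)) (z + (r/2) *\<^sub>R (cos \<phi>, sin \<phi>)))"

definition len :: "segment \<Rightarrow> real" where
  "len y = fst (snd y)"

definition ind :: "segment \<Rightarrow> segment \<Rightarrow> real" where
  "ind y1 y2 = (if seg y1 \<inter> seg y2 \<noteq> {} then 1 else 0)"

definition segY :: "(real \<times> real) set \<Rightarrow> real \<Rightarrow> segment set" where
  "segY B b = B \<times> {0<..b} \<times> {0..<pi}"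

definition intensity :: "(real \<times> real) set \<Rightarrow> real \<Rightarrow> (real \<times> real \<Rightarrow> real)
    \<Rightarrow> real measure \<Rightarrow> real measure \<Rightarrow> segment measure" where
  "intensity B b \<rho> Q V =
     density (lborel \<Otimes>\<^sub>M (Q \<Otimes>\<^sub>M V)) (\<lambda>y. indicator (segY B b) y * ennreal (\<rho> (fst y)))"

text \<open>A finite configuration is represented by (n, xs): the segments xs 0, ..., xs (n-1).\<close>
definition Lc :: "nat \<Rightarrow> (nat \<Rightarrow> segment) \<Rightarrow> real" where
  "Lc n xs = (\<Sum>i<n. len (xs i))"

definition Nc :: "nat \<Rightarrow> (nat \<Rightarrow> segment) \<Rightarrow> real" where
  "Nc n xs = 1/2 * (\<Sum>i<n. \<Sum>j<n. if i \<noteq> j then ind (xs i) (xs j) else 0)"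

definition Gexp :: "real \<Rightarrow> real \<Rightarrow> nat \<Rightarrow> (nat \<Rightarrow> segment) \<Rightarrow> real" where
  "Gexp \<nu>1 \<nu>2 n xs = exp (\<nu>1 * Lc n xs + \<nu>2 * Nc n xs)"

text \<open>Expectation of F(eta) for the Poisson process eta with finite intensity measure lam:
  E F(eta) = exp(-lam(Y)) * sum_n 1/n! * int_{Y^n} F(y_1..y_n) lam^n(dy).\<close>
definition poisson_expect :: "segment measure \<Rightarrow> (nat \<Rightarrow> (nat \<Rightarrow> segment) \<Rightarrow> real) \<Rightarrow> real" where
  "poisson_expect lam F = exp (- measure lam (space lam)) *
     (\<Sum>k. (1 / fact k) * (\<integral>xs. F k xs \<partial>(PiM {..<k} (\<lambda>_. lam))))"

text \<open>Expectation for the Gibbs segment process mu with density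
  p = c^{-1} exp(nu1 L + nu2 N) w.r.t. the law of eta, c = E exp(nu1 L(eta) + nu2 N(eta)).\<close>
definition gibbs_expect :: "segment measure \<Rightarrow> real \<Rightarrow> real \<Rightarrow> (nat \<Rightarrow> (nat \<Rightarrow> segment) \<Rightarrow> real) \<Rightarrow> real" where
  "gibbs_expect lam \<nu>1 \<nu>2 F =
     poisson_expect lam (\<lambda>n xs. F n xs * Gexp \<nu>1 \<nu>2 n xs) / poisson_expect lam (Gexp \<nu>1 \<nu>2)"

definition calE :: "real \<Rightarrow> real \<Rightarrow> nat \<Rightarrow> (nat \<Rightarrow> segment) \<Rightarrow> nat \<Rightarrow> (nat \<Rightarrow> segment) \<Rightarrow> real" where
  "calE \<nu>1 \<nu>2 n xs m ys = exp (\<nu>1 * (\<Sum>i<m. len (ys i)) +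
     \<nu>2 * ((\<Sum>i<m. \<Sum>s<n. ind (xs s) (ys i)) +
           (\<Sum>i<m. \<Sum>j<m. if i < j then ind (ys i) (ys j) else 0)))"

end

theory Submission
  imports Defs
begin

text \<open>
  The Gibbs expectation is a ratio of Poisson expectations, E F(mu) = E[F(eta) p(eta)] / E p(eta) with
  p = exp (nu1 L + nu2 N). Each of L, N, L^2, N^2 is a sum, over injective m-tuples of points of the
  configuration (m at most 4), of a bounded function g of those m points; for N^2 one splits pairs of
  pairs by the number of indices they share. For such sums the multivariate Mecke formula holds: in
  the n-th term of the Poisson series a permutation of the coordinates moves the chosen points to the
  end, the product measure splits as lam^(n-m) x lam^m, and p(x + y) = p(x) E_x(y). There are
  n!/(n-m)! injections, so the series re-sums to E[sum g p(eta)] = int g(y) E[E_eta(y) p(eta)] lam^m(dy).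
  Summation and integration may be exchanged because nu2 <= 0 and lengths at most b give
  p(x) <= exp (|nu1| b)^n.
\<close>

section \<open>Measurability of segment functionals\<close>

lemma closed_intersecting_segments: "closed {p :: segment \<times> segment. seg (fst p) \<inter> seg (snd p) \<noteq> {}}"
proof -
  define u :: "segment \<Rightarrow> real \<times> real" where
    "u y = (fst (snd y) / 2) *\<^sub>R (cos (snd (snd y)), sin (snd (snd y)))" for y
  have seg_eq: "seg y = closed_segment (fst y - u y) (fst y + u y)" for y
    by (simp add: seg_def u_def split: prod.split)
  have u_cont: "continuous_on UNIV u"
    unfolding u_def by (intro continuous_intros) auto
  let ?at = "\<lambda>s y. (1 - s) *\<^sub>R (fst y - u y) + s *\<^sub>R (fst y + u y)"
  have "{p. seg (fst p) \<inter> seg (snd p) \<noteq> {}} =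
      {p. \<exists>st. st \<in> cbox (0, 0) (1, 1) \<and> (st, p) \<in> {q. ?at (fst (fst q)) (fst (snd q)) = ?at (snd (fst q)) (snd (snd q))}}"
    unfolding seg_eq closed_segment_def by (auto simp: cbox_Pair_iff) metis+
  also have "closed \<dots>"
    by (intro closed_compact_projection compact_cbox closed_Collect_eq
        continuous_intros continuous_on_compose2[OF u_cont]) auto
  finally show ?thesis .
qed

lemma borel_measurable_ind: "(\<lambda>p. ind (fst p) (snd p)) \<in> borel_measurable borel"
proof -
  have "(\<lambda>p. ind (fst p) (snd p)) = indicator {p. seg (fst p) \<inter> seg (snd p) \<noteq> {}}"
    by (auto simp: ind_def indicator_def)
  then show ?thesis
    using closed_intersecting_segments by (simp add: borel_closed)
qed

lemma borel_measurable_len: "len \<in> borel_measurable borel"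
  unfolding len_def by (intro borel_measurable_continuous_onI continuous_intros)

section \<open>Injective tuples of indices\<close>

definition injections :: "nat \<Rightarrow> nat \<Rightarrow> (nat \<Rightarrow> nat) set" where
  "injections m n = {\<sigma> \<in> {..<m} \<rightarrow>\<^sub>E {..<n}. inj_on \<sigma> {..<m}}"

lemma finite_injections: "finite (injections m n)"
  unfolding injections_def by (rule finite_subset[OF _ finite_PiE[of "{..<m}" "\<lambda>_. {..<n}"]]) auto

lemma injections_0: "injections 0 n = {\<lambda>_. undefined}"
  unfolding injections_def by auto

lemma injections_Suc_iff:
  "\<tau> \<in> injections (Suc m) n \<longleftrightarrow>
     \<tau>(m := undefined) \<in> injections m n \<and> \<tau> m < n \<and> \<tau> m \<notin> \<tau> ` {..<m}"
proof -
  have "inj_on \<tau> {..<Suc m} \<longleftrightarrow> inj_on \<tau> {..<m} \<and> \<tau> m \<notin> \<tau> ` {..<m}"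
    by (simp add: lessThan_Suc)
  moreover have "inj_on (\<tau>(m := undefined)) {..<m} \<longleftrightarrow> inj_on \<tau> {..<m}"
    by (rule inj_on_cong) simp
  moreover have "\<tau>(m := undefined) ` {..<m} = \<tau> ` {..<m}"
    by auto
  moreover have "\<tau> \<in> {..<Suc m} \<rightarrow>\<^sub>E {..<n} \<longleftrightarrow> \<tau>(m := undefined) \<in> {..<m} \<rightarrow>\<^sub>E {..<n} \<and> \<tau> m < n"
    by (auto simp: PiE_def Pi_def extensional_def less_Suc_eq)
  ultimately show ?thesis
    unfolding injections_def by auto
qed

lemma bij_betw_injections_Suc:
  "bij_betw (\<lambda>(\<sigma>, i). \<sigma>(m := i)) (SIGMA \<sigma>:injections m n. {..<n} - \<sigma> ` {..<m}) (injections (Suc m) n)"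
proof (rule bij_betw_byWitness[where f'="\<lambda>\<tau>. (\<tau>(m := undefined), \<tau> m)"])
  have "\<sigma> m = undefined" if "\<sigma> \<in> injections m n" for \<sigma>
    using that by (auto simp: injections_def PiE_def extensional_def)
  moreover have "\<sigma>(m := i) ` {..<m} = \<sigma> ` {..<m}" for \<sigma> :: "nat \<Rightarrow> nat" and i
    by auto
  ultimately show "(\<lambda>(\<sigma>, i). \<sigma>(m := i)) ` (SIGMA \<sigma>:injections m n. {..<n} - \<sigma> ` {..<m}) \<subseteq> injections (Suc m) n"
    and "\<forall>a\<in>SIGMA \<sigma>:injections m n. {..<n} - \<sigma> ` {..<m}. (\<lambda>\<tau>. (\<tau>(m := undefined), \<tau> m)) ((\<lambda>(\<sigma>, i). \<sigma>(m := i)) a) = a"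
    by (auto simp: injections_Suc_iff fun_upd_idem)
  show "(\<lambda>\<tau>. (\<tau>(m := undefined), \<tau> m)) ` injections (Suc m) n \<subseteq> (SIGMA \<sigma>:injections m n. {..<n} - \<sigma> ` {..<m})"
    by (auto simp: injections_Suc_iff)
qed simp

lemma sum_injections_Suc:
  "(\<Sum>\<sigma>\<in>injections (Suc m) n. f \<sigma>) = (\<Sum>\<sigma>\<in>injections m n. \<Sum>i\<in>{..<n} - \<sigma> ` {..<m}. f (\<sigma>(m := i)))"
  by (simp add: sum.reindex_bij_betw[OF bij_betw_injections_Suc, symmetric] sum.Sigma finite_injections
      split_beta)

lemma card_injections: "m \<le> n \<Longrightarrow> card (injections m n) * fact (n - m) = (fact n :: nat)"
proof (induction m)
  case 0
  then show ?case by (simp add: injections_0)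
next
  case (Suc m)
  have "card (injections (Suc m) n) = (\<Sum>\<sigma>\<in>injections m n. card ({..<n} - \<sigma> ` {..<m}))"
    using sum_injections_Suc[where f = "\<lambda>_. 1 :: nat"] by simp
  also have "\<dots> = (\<Sum>\<sigma>\<in>injections m n. n - m)"
  proof (rule sum.cong[OF refl])
    fix \<sigma> assume "\<sigma> \<in> injections m n"
    then have "\<sigma> ` {..<m} \<subseteq> {..<n}" "card (\<sigma> ` {..<m}) = m"
      by (auto simp: injections_def card_image)
    then show "card ({..<n} - \<sigma> ` {..<m}) = n - m"
      by (simp add: card_Diff_subset finite_subset)
  qed
  also have "\<dots> = card (injections m n) * (n - m)"
    by simp
  finally have "card (injections (Suc m) n) * fact (n - Suc m) = card (injections m n) * fact (n - m)"
    using Suc.prems by (simp add: fact_reduce[of "n - m"])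
  then show ?case
    using Suc by simp
qed

lemma injections_empty: "n < m \<Longrightarrow> injections m n = {}"
  unfolding injections_def
  using card_inj_on_le[of _ "{..<m}" "{..<n}"] by (force simp: Pi_def)

lemma injection_extends_to_permutation:
  assumes "\<sigma> \<in> injections m (k + m)"
  obtains \<tau> where "bij_betw \<tau> {..<k + m} {..<k + m}" "\<And>i. i < m \<Longrightarrow> \<tau> (\<sigma> i) = k + i"
proof -
  let ?S = "\<sigma> ` {..<m}"
  have inj: "inj_on \<sigma> {..<m}" and S_sub: "?S \<subseteq> {..<k + m}"
    using assms by (auto simp: injections_def)
  have "card ({..<k + m} - ?S) = k"
    using S_sub inj by (simp add: card_Diff_subset card_image)
  then obtain h where h: "bij_betw h {..<k} ({..<k + m} - ?S)"
    using ex_bij_betw_nat_finite[of "{..<k + m} - ?S"] by (auto simp: atLeast0LessThan)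
  define \<rho> where "\<rho> j = (if j < k then h j else \<sigma> (j - k))" for j
  have "bij_betw \<rho> {..<k} ({..<k + m} - ?S)"
    using h by (rule bij_betw_cong[THEN iffD1, rotated]) (simp add: \<rho>_def)
  moreover have "bij_betw \<rho> {k..<k + m} ?S"
  proof (rule bij_betw_imageI)
    show "inj_on \<rho> {k..<k + m}"
    proof (rule inj_onI)
      fix x y assume "x \<in> {k..<k + m}" "y \<in> {k..<k + m}" "\<rho> x = \<rho> y"
      then have "x - k = y - k"
        using inj_onD[OF inj, of "x - k" "y - k"] by (auto simp: \<rho>_def)
      with \<open>x \<in> {k..<k + m}\<close> \<open>y \<in> {k..<k + m}\<close> show "x = y"
        by auto
    qed
    show "\<rho> ` {k..<k + m} = ?S"
      by (force simp: \<rho>_def image_iff intro: bexI[where x = "k + _"])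
  qed
  ultimately have "bij_betw \<rho> ({..<k} \<union> {k..<k + m}) (({..<k + m} - ?S) \<union> ?S)"
    by (rule bij_betw_combine) blast
  moreover have "{..<k} \<union> {k..<k + m} = {..<k + m}" and "({..<k + m} - ?S) \<union> ?S = {..<k + m}"
    using S_sub by auto
  ultimately have \<rho>: "bij_betw \<rho> {..<k + m} {..<k + m}"
    by simp
  show ?thesis
  proof
    show "bij_betw (inv_into {..<k + m} \<rho>) {..<k + m} {..<k + m}"
      using \<rho> by (rule bij_betw_inv_into)
    show "inv_into {..<k + m} \<rho> (\<sigma> i) = k + i" if "i < m" for i
      using inv_into_f_f[OF bij_betw_imp_inj_on[OF \<rho>], of "k + i"] that by (simp add: \<rho>_def)
  qed
qed

lemma sum_injections_1: "(\<Sum>\<sigma>\<in>injections 1 n. f (\<sigma> 0)) = (\<Sum>i<n. f i)"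
  using sum_injections_Suc[where m = 0 and f = "\<lambda>\<sigma>. f (\<sigma> 0)"] by (simp add: injections_0)

lemma sum_injections_2:
  "(\<Sum>\<sigma>\<in>injections 2 n. f (\<sigma> 0) (\<sigma> 1)) = (\<Sum>i<n. \<Sum>j\<in>{..<n} - {i}. f i j)"
proof -
  have "(\<Sum>\<sigma>\<in>injections (Suc 1) n. f (\<sigma> 0) (\<sigma> 1)) =
      (\<Sum>\<sigma>\<in>injections 1 n. \<Sum>j\<in>{..<n} - \<sigma> ` {..<1}. f ((\<sigma>(1 := j)) 0) ((\<sigma>(1 := j)) 1))"
    by (rule sum_injections_Suc)
  also have "\<dots> = (\<Sum>\<sigma>\<in>injections 1 n. (\<lambda>i. \<Sum>j\<in>{..<n} - {i}. f i j) (\<sigma> 0))"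
    by (simp add: lessThan_Suc)
  also have "\<dots> = (\<Sum>i<n. \<Sum>j\<in>{..<n} - {i}. f i j)"
    by (rule sum_injections_1)
  finally show ?thesis
    unfolding Suc_1 .
qed

lemma sum_injections_3:
  "(\<Sum>\<sigma>\<in>injections 3 n. f (\<sigma> 0) (\<sigma> 1) (\<sigma> 2)) =
     (\<Sum>i<n. \<Sum>j\<in>{..<n} - {i}. \<Sum>k\<in>{..<n} - {i, j}. f i j k)"
proof -
  have "(\<Sum>\<sigma>\<in>injections (Suc 2) n. f (\<sigma> 0) (\<sigma> 1) (\<sigma> 2)) =
      (\<Sum>\<sigma>\<in>injections 2 n. \<Sum>k\<in>{..<n} - \<sigma> ` {..<2}.
         f ((\<sigma>(2 := k)) 0) ((\<sigma>(2 := k)) 1) ((\<sigma>(2 := k)) 2))"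
    by (rule sum_injections_Suc)
  also have "\<dots> = (\<Sum>\<sigma>\<in>injections 2 n. (\<lambda>i j. \<Sum>k\<in>{..<n} - {i, j}. f i j k) (\<sigma> 0) (\<sigma> 1))"
    by (simp add: lessThan_Suc numeral_2_eq_2 insert_commute)
  also have "\<dots> = (\<Sum>i<n. \<Sum>j\<in>{..<n} - {i}. \<Sum>k\<in>{..<n} - {i, j}. f i j k)"
    by (rule sum_injections_2)
  finally show ?thesis
    by (simp add: numeral_3_eq_3)
qed

lemma sum_injections_4:
  "(\<Sum>\<sigma>\<in>injections 4 n. f (\<sigma> 0) (\<sigma> 1) (\<sigma> 2) (\<sigma> 3)) =
     (\<Sum>i<n. \<Sum>j\<in>{..<n} - {i}. \<Sum>k\<in>{..<n} - {i, j}. \<Sum>l\<in>{..<n} - {i, j, k}. f i j k l)"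
proof -
  have "(\<Sum>\<sigma>\<in>injections (Suc 3) n. f (\<sigma> 0) (\<sigma> 1) (\<sigma> 2) (\<sigma> 3)) =
      (\<Sum>\<sigma>\<in>injections 3 n. \<Sum>l\<in>{..<n} - \<sigma> ` {..<3}.
         f ((\<sigma>(3 := l)) 0) ((\<sigma>(3 := l)) 1) ((\<sigma>(3 := l)) 2) ((\<sigma>(3 := l)) 3))"
    by (rule sum_injections_Suc)
  also have "\<dots> = (\<Sum>\<sigma>\<in>injections 3 n.
      (\<lambda>i j k. \<Sum>l\<in>{..<n} - {i, j, k}. f i j k l) (\<sigma> 0) (\<sigma> 1) (\<sigma> 2))"
  proof (rule sum.cong[OF refl])
    fix \<sigma> :: "nat \<Rightarrow> nat"
    have "\<sigma> ` {..<3} = {\<sigma> 0, \<sigma> 1, \<sigma> 2}"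
      by (auto simp: numeral_3_eq_3 numeral_2_eq_2 lessThan_Suc)
    then show "(\<Sum>l\<in>{..<n} - \<sigma> ` {..<3}.
        f ((\<sigma>(3 := l)) 0) ((\<sigma>(3 := l)) 1) ((\<sigma>(3 := l)) 2) ((\<sigma>(3 := l)) 3)) =
      (\<lambda>i j k. \<Sum>l\<in>{..<n} - {i, j, k}. f i j k l) (\<sigma> 0) (\<sigma> 1) (\<sigma> 2)"
      by simp
  qed
  also have "\<dots> = (\<Sum>i<n. \<Sum>j\<in>{..<n} - {i}. \<Sum>k\<in>{..<n} - {i, j}. \<Sum>l\<in>{..<n} - {i, j, k}. f i j k l)"
    by (rule sum_injections_3)
  finally show ?thesis
    by (simp add: numeral_Bit0)
qed

definition short_segs :: "real \<Rightarrow> segment set" where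
  "short_segs b = {y. 0 \<le> len y \<and> len y \<le> b}"

definition config_append :: "nat \<Rightarrow> (nat \<Rightarrow> segment) \<Rightarrow> (nat \<Rightarrow> segment) \<Rightarrow> nat \<Rightarrow> segment" where
  "config_append k xs ys = (\<lambda>i. if i < k then xs i else ys (i - k))"

lemma ind_commute: "ind y1 y2 = ind y2 y1"
  by (auto simp: ind_def)

lemma ind_nonneg: "0 \<le> ind y1 y2"
  by (simp add: ind_def)

lemma ind_idem: "ind y1 y2 * ind y1 y2 = ind y1 y2"
  by (simp add: ind_def)

lemma Lc_cong: "(\<And>i. i < n \<Longrightarrow> xs i = xs' i) \<Longrightarrow> Lc n xs = Lc n xs'"
  unfolding Lc_def by simp

lemma Nc_cong: "(\<And>i. i < n \<Longrightarrow> xs i = xs' i) \<Longrightarrow> Nc n xs = Nc n xs'"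
  unfolding Nc_def by (intro arg_cong[where f = "\<lambda>x. 1/2 * x"] sum.cong refl) auto

lemma Gexp_cong: "(\<And>i. i < n \<Longrightarrow> xs i = xs' i) \<Longrightarrow> Gexp \<nu>1 \<nu>2 n xs = Gexp \<nu>1 \<nu>2 n xs'"
  unfolding Gexp_def using Lc_cong Nc_cong by metis

lemma calE_cong:
  "(\<And>i. i < n \<Longrightarrow> xs i = xs' i) \<Longrightarrow> (\<And>i. i < m \<Longrightarrow> ys i = ys' i) \<Longrightarrow>
     calE \<nu>1 \<nu>2 n xs m ys = calE \<nu>1 \<nu>2 n xs' m ys'"
  unfolding calE_def by (intro arg_cong[where f = exp] arg_cong2[where f = "(+)"]
      arg_cong2[where f = "(*)"] sum.cong refl) auto

lemma Nc_nonneg: "0 \<le> Nc n xs"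
  unfolding Nc_def by (intro mult_nonneg_nonneg sum_nonneg) (auto simp: ind_nonneg)

lemma Lc_bounds:
  assumes "\<And>i. i < n \<Longrightarrow> xs i \<in> short_segs b"
  shows "0 \<le> Lc n xs" "Lc n xs \<le> n * b"
proof -
  show "0 \<le> Lc n xs"
    unfolding Lc_def using assms by (intro sum_nonneg) (auto simp: short_segs_def)
  have "Lc n xs \<le> (\<Sum>i<n. b)"
    unfolding Lc_def using assms by (intro sum_mono) (auto simp: short_segs_def)
  then show "Lc n xs \<le> n * b"
    by simp
qed

lemma mult_Lc_le:
  assumes "\<And>i. i < n \<Longrightarrow> xs i \<in> short_segs b"
  shows "a * Lc n xs \<le> \<bar>a\<bar> * (n * b)"
proof -
  have "a * Lc n xs \<le> \<bar>a\<bar> * Lc n xs"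
    using Lc_bounds(1)[OF assms] by (simp add: mult_right_mono)
  also have "\<dots> \<le> \<bar>a\<bar> * (n * b)"
    using Lc_bounds(2)[OF assms] by (simp add: mult_left_mono)
  finally show ?thesis .
qed

lemma Gexp_le:
  assumes "\<nu>2 \<le> 0" and short: "\<And>i. i < n \<Longrightarrow> xs i \<in> short_segs b"
  shows "Gexp \<nu>1 \<nu>2 n xs \<le> exp (\<bar>\<nu>1\<bar> * (n * b))"
proof -
  have "\<nu>1 * Lc n xs \<le> \<bar>\<nu>1\<bar> * (n * b)"
    using short by (rule mult_Lc_le)
  moreover have "\<nu>2 * Nc n xs \<le> 0"
    using assms(1) Nc_nonneg by (rule mult_nonpos_nonneg)
  ultimately show ?thesis
    by (simp add: Gexp_def)
qed

lemma calE_le: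
  assumes "\<nu>2 \<le> 0" and short: "\<And>i. i < m \<Longrightarrow> ys i \<in> short_segs b"
  shows "calE \<nu>1 \<nu>2 n xs m ys \<le> exp (\<bar>\<nu>1\<bar> * (m * b))"
proof -
  have "\<nu>1 * Lc m ys \<le> \<bar>\<nu>1\<bar> * (m * b)"
    using short by (rule mult_Lc_le)
  moreover have "0 \<le> (\<Sum>i<m. \<Sum>s<n. ind (xs s) (ys i)) + (\<Sum>i<m. \<Sum>j<m. if i < j then ind (ys i) (ys j) else 0)"
    by (intro add_nonneg_nonneg sum_nonneg) (auto simp: ind_nonneg)
  then have "\<nu>2 * ((\<Sum>i<m. \<Sum>s<n. ind (xs s) (ys i)) +
      (\<Sum>i<m. \<Sum>j<m. if i < j then ind (ys i) (ys j) else 0)) \<le> 0"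
    using assms(1) by (simp add: mult_nonpos_nonneg)
  ultimately show ?thesis
    unfolding calE_def Lc_def by simp
qed

lemma Lc_permute: "bij_betw \<tau> {..<n} {..<n} \<Longrightarrow> Lc n (\<lambda>i. xs (\<tau> i)) = Lc n xs"
  unfolding Lc_def by (rule sum.reindex_bij_betw)

lemma Nc_permute:
  assumes \<tau>: "bij_betw \<tau> {..<n} {..<n}"
  shows "Nc n (\<lambda>i. xs (\<tau> i)) = Nc n xs"
proof -
  let ?A = "\<lambda>i j. if i \<noteq> j then ind (xs i) (xs j) else 0"
  have "i < n \<Longrightarrow> j < n \<Longrightarrow> \<tau> i \<noteq> \<tau> j \<longleftrightarrow> i \<noteq> j" for i j
    using \<tau> unfolding bij_betw_def inj_on_def by auto
  then have "(\<Sum>i<n. \<Sum>j<n. if i \<noteq> j then ind (xs (\<tau> i)) (xs (\<tau> j)) else 0) =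
      (\<Sum>i<n. \<Sum>j<n. ?A (\<tau> i) (\<tau> j))"
    by (intro sum.cong refl) simp
  also have "\<dots> = (\<Sum>i<n. (\<lambda>i'. \<Sum>j<n. ?A i' j) (\<tau> i))"
    by (rule sum.cong[OF refl], rule sum.reindex_bij_betw[OF \<tau>])
  also have "\<dots> = (\<Sum>i<n. \<Sum>j<n. ?A i j)"
    by (rule sum.reindex_bij_betw[OF \<tau>])
  finally show ?thesis
    unfolding Nc_def by simp
qed

lemma Gexp_permute:
  "bij_betw \<tau> {..<n} {..<n} \<Longrightarrow> Gexp \<nu>1 \<nu>2 n (\<lambda>i. xs (\<tau> i)) = Gexp \<nu>1 \<nu>2 n xs"
  unfolding Gexp_def by (simp add: Lc_permute Nc_permute)

lemma (in comm_monoid_set) lessThan_add: "F g {..<k + m :: nat} = F g {..<k} \<^bold>* F (\<lambda>i. g (k + i)) {..<m}"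
  by (induction m) (simp_all add: assoc)

lemma Lc_append: "Lc (k + m) (config_append k xs ys) = Lc k xs + Lc m ys"
  unfolding Lc_def sum.lessThan_add by (simp add: config_append_def)

lemma sum_offdiag_eq_twice_upper:
  "(\<Sum>i<m :: nat. \<Sum>j<m. if i \<noteq> j then ind (ys i) (ys j) else 0) =
     2 * (\<Sum>i<m. \<Sum>j<m. if i < j then ind (ys i) (ys j) else 0)"
proof -
  have "(\<Sum>i<m. \<Sum>j<m. if i \<noteq> j then ind (ys i) (ys j) else 0) =
      (\<Sum>i<m. \<Sum>j<m. (if i < j then ind (ys i) (ys j) else 0) + (if j < i then ind (ys i) (ys j) else 0))"
    by (intro sum.cong refl) auto
  also have "\<dots> = (\<Sum>i<m. \<Sum>j<m. if i < j then ind (ys i) (ys j) else 0) +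
      (\<Sum>i<m. \<Sum>j<m. if j < i then ind (ys i) (ys j) else 0)"
    by (simp add: sum.distrib)
  also have "(\<Sum>i<m. \<Sum>j<m. if j < i then ind (ys i) (ys j) else 0) =
      (\<Sum>i<m. \<Sum>j<m. if i < j then ind (ys i) (ys j) else 0)"
    by (subst sum.swap) (intro sum.cong refl, metis ind_commute)
  finally show ?thesis
    by simp
qed

lemma Nc_append:
  "Nc (k + m) (config_append k xs ys) = Nc k xs + (\<Sum>i<m. \<Sum>s<k. ind (xs s) (ys i))
     + (\<Sum>i<m. \<Sum>j<m. if i < j then ind (ys i) (ys j) else 0)"
proof -
  let ?A = "\<lambda>i j. if i \<noteq> j then ind (config_append k xs ys i) (config_append k xs ys j) else 0"
  have "(\<Sum>i<k + m. \<Sum>j<k + m. ?A i j) = (\<Sum>i<k. \<Sum>j<k. ?A i j) + (\<Sum>i<k. \<Sum>j<m. ?A i (k + j))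
      + ((\<Sum>i<m. \<Sum>j<k. ?A (k + i) j) + (\<Sum>i<m. \<Sum>j<m. ?A (k + i) (k + j)))"
    unfolding sum.lessThan_add by (simp add: sum.distrib)
  also have "(\<Sum>i<k. \<Sum>j<k. ?A i j) = (\<Sum>i<k. \<Sum>j<k. if i \<noteq> j then ind (xs i) (xs j) else 0)"
    by (intro sum.cong refl) (simp add: config_append_def)
  also have "(\<Sum>i<k. \<Sum>j<m. ?A i (k + j)) = (\<Sum>i<m. \<Sum>s<k. ind (xs s) (ys i))"
    by (subst sum.swap) (intro sum.cong refl, simp add: config_append_def)
  also have "(\<Sum>i<m. \<Sum>j<k. ?A (k + i) j) = (\<Sum>i<m. \<Sum>s<k. ind (xs s) (ys i))"
    by (intro sum.cong refl) (simp add: config_append_def ind_commute)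
  also have "(\<Sum>i<m. \<Sum>j<m. ?A (k + i) (k + j)) = (\<Sum>i<m. \<Sum>j<m. if i \<noteq> j then ind (ys i) (ys j) else 0)"
    by (intro sum.cong refl) (simp add: config_append_def)
  finally show ?thesis
    unfolding Nc_def sum_offdiag_eq_twice_upper by (simp add: algebra_simps)
qed

lemma Gexp_append:
  "Gexp \<nu>1 \<nu>2 (k + m) (config_append k xs ys) = Gexp \<nu>1 \<nu>2 k xs * calE \<nu>1 \<nu>2 k xs m ys"
  unfolding Gexp_def calE_def Lc_append Nc_append by (simp add: Lc_def exp_add[symmetric] algebra_simps)

lemma sum_if_neq: "(\<Sum>j<n :: nat. if i \<noteq> j then a j else 0) = (\<Sum>j\<in>{..<n} - {i}. a j)"
proof -
  have "{j \<in> {..<n}. i \<noteq> j} = {..<n} - {i}"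
    by auto
  then show ?thesis
    using sum.inter_filter[of "{..<n}" a "\<lambda>j. i \<noteq> j"] by simp
qed

lemma sum_offdiag_swap:
  "(\<Sum>i<n :: nat. \<Sum>j\<in>{..<n} - {i}. F i j) = (\<Sum>i<n. \<Sum>j\<in>{..<n} - {i}. F j i)"
proof -
  have "(\<Sum>i<n. \<Sum>j\<in>{..<n} - {i}. F i j) = (\<Sum>i<n. \<Sum>j<n. if i \<noteq> j then F i j else 0)"
    by (simp add: sum_if_neq)
  also have "\<dots> = (\<Sum>j<n. \<Sum>i<n. if j \<noteq> i then F i j else 0)"
    by (subst sum.swap) (intro sum.cong refl, auto)
  also have "\<dots> = (\<Sum>i<n. \<Sum>j\<in>{..<n} - {i}. F j i)"
    by (simp add: sum_if_neq)
  finally show ?thesis .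
qed

lemma sum_offdiag_split_pair:
  fixes b :: "nat \<Rightarrow> nat \<Rightarrow> 'a :: comm_monoid_add"
  assumes ij: "i < n" "j < n" "i \<noteq> j"
  defines "R \<equiv> {..<n} - {i, j}"
  shows "(\<Sum>k<n. \<Sum>l\<in>{..<n} - {k}. b k l) =
    b i j + b j i + (\<Sum>k\<in>R. b i k + b j k + b k i + b k j) + (\<Sum>k\<in>R. \<Sum>l\<in>{..<n} - {i, j, k}. b k l)"
proof -
  let ?F = "\<lambda>k. \<Sum>l\<in>{..<n} - {k}. b k l"
  have R: "finite R" "i \<notin> R" "j \<notin> R"
    by (auto simp: R_def)
  have "(\<Sum>k<n. ?F k) = sum ?F (insert i (insert j R))"
    using ij by (intro arg_cong[where f = "sum ?F"]) (auto simp: R_def)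
  also have "\<dots> = ?F i + ?F j + (\<Sum>k\<in>R. ?F k)"
    using R ij by (simp add: add.assoc)
  also have "?F i = b i j + (\<Sum>l\<in>R. b i l)"
  proof -
    have "{..<n} - {i} = insert j R"
      using ij by (auto simp: R_def)
    then show ?thesis
      using R by simp
  qed
  also have "?F j = b j i + (\<Sum>l\<in>R. b j l)"
  proof -
    have "{..<n} - {j} = insert i R"
      using ij by (auto simp: R_def)
    then show ?thesis
      using R by simp
  qed
  also have "(\<Sum>k\<in>R. ?F k) = (\<Sum>k\<in>R. b k i + b k j + (\<Sum>l\<in>{..<n} - {i, j, k}. b k l))"
  proof (rule sum.cong[OF refl])
    fix k assume "k \<in> R"
    define X where "X = {..<n} - {i, j, k}"
    have "{..<n} - {k} = insert i (insert j X)" and X: "finite X" "i \<notin> insert j X" "j \<notin> X"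
      using \<open>k \<in> R\<close> ij by (auto simp: R_def X_def)
    then show "?F k = b k i + b k j + (\<Sum>l\<in>{..<n} - {i, j, k}. b k l)"
      by (simp only: X_def[symmetric] sum.insert[OF finite_insert[THEN iffD2, OF X(1)] X(2)]
          sum.insert[OF X(1,3)] add.assoc)
  qed
  finally show ?thesis
    by (simp only: sum.distrib ac_simps)
qed

lemma sum_offdiag_square:
  fixes I :: "nat \<Rightarrow> nat \<Rightarrow> real" and n :: nat
  assumes sym: "\<And>a b. I a b = I b a" and idem: "\<And>a b. I a b * I a b = I a b"
  defines "S \<equiv> \<Sum>i<n. \<Sum>j\<in>{..<n} - {i}. I i j"
  shows "S * S = 2 * S + 4 * (\<Sum>i<n. \<Sum>j\<in>{..<n} - {i}. \<Sum>k\<in>{..<n} - {i, j}. I i j * I k i)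
     + (\<Sum>i<n. \<Sum>j\<in>{..<n} - {i}. \<Sum>k\<in>{..<n} - {i, j}. \<Sum>l\<in>{..<n} - {i, j, k}. I i j * I k l)"
proof -
  let ?Q3 = "\<Sum>i<n. \<Sum>j\<in>{..<n} - {i}. \<Sum>k\<in>{..<n} - {i, j}. I i j * I k i"
  let ?Q3' = "\<Sum>i<n. \<Sum>j\<in>{..<n} - {i}. \<Sum>k\<in>{..<n} - {i, j}. I i j * I k j"
  let ?Q4 = "\<Sum>i<n. \<Sum>j\<in>{..<n} - {i}. \<Sum>k\<in>{..<n} - {i, j}. \<Sum>l\<in>{..<n} - {i, j, k}. I i j * I k l"
  have I_mult_S: "I i j * S = 2 * I i j + 2 * (\<Sum>k\<in>{..<n} - {i, j}. I i j * I k i)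
      + 2 * (\<Sum>k\<in>{..<n} - {i, j}. I i j * I k j) + (\<Sum>k\<in>{..<n} - {i, j}. \<Sum>l\<in>{..<n} - {i, j, k}. I i j * I k l)"
    if "i \<in> {..<n}" "j \<in> {..<n} - {i}" for i j
  proof -
    have "(\<Sum>k\<in>{..<n} - {i, j}. I i k + I j k + I k i + I k j) =
        (\<Sum>k\<in>{..<n} - {i, j}. 2 * I k i + 2 * I k j)"
      by (intro sum.cong refl) (simp add: sym[of i] sym[of j])
    also have "\<dots> = 2 * (\<Sum>k\<in>{..<n} - {i, j}. I k i) + 2 * (\<Sum>k\<in>{..<n} - {i, j}. I k j)"
      by (simp add: sum.distrib sum_distrib_left)
    finally have "S = 2 * I i j + 2 * (\<Sum>k\<in>{..<n} - {i, j}. I k i) + 2 * (\<Sum>k\<in>{..<n} - {i, j}. I k j)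
        + (\<Sum>k\<in>{..<n} - {i, j}. \<Sum>l\<in>{..<n} - {i, j, k}. I k l)"
      using sum_offdiag_split_pair[of i n j I] that sym[of j i] unfolding S_def by simp
    then show ?thesis
      by (simp add: distrib_left sum_distrib_left mult.left_commute[of "I i j" 2] idem)
  qed
  have "S * S = (\<Sum>i<n. \<Sum>j\<in>{..<n} - {i}. I i j) * S"
    unfolding S_def by (rule refl)
  also have "\<dots> = (\<Sum>i<n. \<Sum>j\<in>{..<n} - {i}. I i j * S)"
    by (simp only: sum_distrib_right)
  also have "\<dots> = (\<Sum>i<n. \<Sum>j\<in>{..<n} - {i}. 2 * I i j + 2 * (\<Sum>k\<in>{..<n} - {i, j}. I i j * I k i)
      + 2 * (\<Sum>k\<in>{..<n} - {i, j}. I i j * I k j) + (\<Sum>k\<in>{..<n} - {i, j}. \<Sum>l\<in>{..<n} - {i, j, k}. I i j * I k l))"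
    by (intro sum.cong refl) (simp add: I_mult_S)
  also have "\<dots> = (\<Sum>i<n. \<Sum>j\<in>{..<n} - {i}. 2 * I i j) + 2 * ?Q3 + 2 * ?Q3' + ?Q4"
    by (simp only: sum.distrib sum_distrib_left)
  also have "(\<Sum>i<n. \<Sum>j\<in>{..<n} - {i}. 2 * I i j) = 2 * S"
    unfolding S_def by (simp only: sum_distrib_left)
  also have "?Q3' = ?Q3"
  proof -
    have "(\<Sum>k\<in>{..<n} - {j, i}. I j i * I k i) = (\<Sum>k\<in>{..<n} - {i, j}. I i j * I k i)" for i j
      by (simp add: insert_commute sym[of j i])
    then show ?thesis
      by (subst sum_offdiag_swap) simp
  qed
  finally show ?thesis
    by linarith
qed

lemma Nc_eq_sum_offdiag: "Nc n xs = 1/2 * (\<Sum>i<n. \<Sum>j\<in>{..<n} - {i}. ind (xs i) (xs j))"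
  unfolding Nc_def by (simp add: sum_if_neq)

lemma Lc_eq_sum_injections: "Lc n xs = (\<Sum>\<sigma>\<in>injections 1 n. len (xs (\<sigma> 0)))"
  unfolding Lc_def by (rule sum_injections_1[symmetric])

lemma Nc_eq_sum_injections: "Nc n xs = (\<Sum>\<sigma>\<in>injections 2 n. 1/2 * ind (xs (\<sigma> 0)) (xs (\<sigma> 1)))"
  using sum_injections_2[where f = "\<lambda>i j. 1/2 * ind (xs i) (xs j)"]
  by (simp add: Nc_eq_sum_offdiag sum_distrib_left)

lemma Lc_square_eq_sum_injections:
  "(Lc n xs)\<^sup>2 = (\<Sum>\<sigma>\<in>injections 1 n. (len (xs (\<sigma> 0)))\<^sup>2)
     + (\<Sum>\<sigma>\<in>injections 2 n. len (xs (\<sigma> 0)) * len (xs (\<sigma> 1)))"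
proof -
  have "(Lc n xs)\<^sup>2 = (\<Sum>i<n. \<Sum>j<n. len (xs i) * len (xs j))"
    unfolding Lc_def power2_eq_square by (rule sum_product)
  also have "\<dots> = (\<Sum>i<n. len (xs i) * len (xs i) + (\<Sum>j\<in>{..<n} - {i}. len (xs i) * len (xs j)))"
    by (intro sum.cong refl) (rule sum.remove, auto)
  also have "\<dots> = (\<Sum>i<n. (len (xs i))\<^sup>2) + (\<Sum>i<n. \<Sum>j\<in>{..<n} - {i}. len (xs i) * len (xs j))"
    by (simp add: sum.distrib power2_eq_square)
  finally show ?thesis
    using sum_injections_1[where f = "\<lambda>i. (len (xs i))\<^sup>2"]
      sum_injections_2[where f = "\<lambda>i j. len (xs i) * len (xs j)"]
    by simp
qed

lemma Nc_square_eq_sum_injections: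
  "(Nc n xs)\<^sup>2 = (\<Sum>\<sigma>\<in>injections 2 n. 1/2 * ind (xs (\<sigma> 0)) (xs (\<sigma> 1)))
     + (\<Sum>\<sigma>\<in>injections 3 n. ind (xs (\<sigma> 0)) (xs (\<sigma> 1)) * ind (xs (\<sigma> 2)) (xs (\<sigma> 0)))
     + (\<Sum>\<sigma>\<in>injections 4 n. 1/4 * (ind (xs (\<sigma> 0)) (xs (\<sigma> 1)) * ind (xs (\<sigma> 2)) (xs (\<sigma> 3))))"
proof -
  define S where "S = (\<Sum>i<n. \<Sum>j\<in>{..<n} - {i}. ind (xs i) (xs j))"
  define Q3 where "Q3 = (\<Sum>i<n. \<Sum>j\<in>{..<n} - {i}. \<Sum>k\<in>{..<n} - {i, j}. ind (xs i) (xs j) * ind (xs k) (xs i))"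
  define Q4 where "Q4 = (\<Sum>i<n. \<Sum>j\<in>{..<n} - {i}. \<Sum>k\<in>{..<n} - {i, j}. \<Sum>l\<in>{..<n} - {i, j, k}.
    ind (xs i) (xs j) * ind (xs k) (xs l))"
  have Nc_eq: "Nc n xs = 1/2 * S"
    unfolding S_def by (rule Nc_eq_sum_offdiag)
  have square: "S * S = 2 * S + 4 * Q3 + Q4"
    unfolding S_def Q3_def Q4_def by (rule sum_offdiag_square) (simp_all add: ind_commute ind_idem)
  have "(Nc n xs)\<^sup>2 = S * S / 4"
    unfolding Nc_eq power2_eq_square by simp
  also have "\<dots> = 1/2 * S + Q3 + 1/4 * Q4"
    unfolding square by simp
  finally have "(Nc n xs)\<^sup>2 = 1/2 * S + Q3 + 1/4 * Q4" .
  moreover have "(\<Sum>\<sigma>\<in>injections 2 n. 1/2 * ind (xs (\<sigma> 0)) (xs (\<sigma> 1))) = 1/2 * S"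
    using sum_injections_2[where f = "\<lambda>i j. 1/2 * ind (xs i) (xs j)"]
    by (simp add: S_def sum_distrib_left)
  moreover have "(\<Sum>\<sigma>\<in>injections 3 n. ind (xs (\<sigma> 0)) (xs (\<sigma> 1)) * ind (xs (\<sigma> 2)) (xs (\<sigma> 0))) = Q3"
    unfolding Q3_def by (rule sum_injections_3)
  moreover have "(\<Sum>\<sigma>\<in>injections 4 n. 1/4 * (ind (xs (\<sigma> 0)) (xs (\<sigma> 1)) * ind (xs (\<sigma> 2)) (xs (\<sigma> 3)))) =
      1/4 * Q4"
    using sum_injections_4[where f = "\<lambda>i j k l. 1/4 * (ind (xs i) (xs j) * ind (xs k) (xs l))"]
    by (simp add: Q4_def sum_distrib_left)
  ultimately show ?thesis
    by simp
qed

section \<open>Poisson expectations\<close>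

lemma (in finite_measure) abs_integral_le_const_bound:
  fixes f :: "'a \<Rightarrow> real"
  assumes "f \<in> borel_measurable M" and bound: "AE x in M. \<bar>f x\<bar> \<le> C"
  shows "\<bar>\<integral>x. f x \<partial>M\<bar> \<le> C * measure M (space M)"
proof -
  have "integrable M f"
    using assms by (intro integrable_const_bound[where B = C]) auto
  have "\<bar>\<integral>x. f x \<partial>M\<bar> \<le> (\<integral>x. \<bar>f x\<bar> \<partial>M)"
    using integral_norm_bound[of M f] by simp
  also have "\<dots> \<le> (\<integral>x. C \<partial>M)"
    using \<open>integrable M f\<close> bound by (intro integral_mono_AE) auto
  finally show ?thesis
    by (simp add: mult.commute)
qed

definition poisson_summable :: "segment measure \<Rightarrow> (nat \<Rightarrow> (nat \<Rightarrow> segment) \<Rightarrow> real) \<Rightarrow> bool" where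
  "poisson_summable lam F \<longleftrightarrow> (\<forall>n. integrable (PiM {..<n} (\<lambda>_. lam)) (F n)) \<and>
     summable (\<lambda>n. 1 / fact n * (\<integral>xs. F n xs \<partial>PiM {..<n} (\<lambda>_. lam)))"

lemma poisson_expect_add:
  assumes "poisson_summable lam F1" "poisson_summable lam F2"
  shows "poisson_expect lam (\<lambda>n xs. F1 n xs + F2 n xs) = poisson_expect lam F1 + poisson_expect lam F2"
    and "poisson_summable lam (\<lambda>n xs. F1 n xs + F2 n xs)"
proof -
  let ?a = "\<lambda>F n. 1 / fact n * (\<integral>xs. F n xs \<partial>PiM {..<n} (\<lambda>_. lam))"
  have sum_eq: "?a (\<lambda>n xs. F1 n xs + F2 n xs) = (\<lambda>n. ?a F1 n + ?a F2 n)"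
    using assms by (auto simp: poisson_summable_def distrib_left)
  have "summable (?a F1)" "summable (?a F2)"
    using assms by (auto simp: poisson_summable_def)
  then have "(\<Sum>n. ?a F1 n + ?a F2 n) = (\<Sum>n. ?a F1 n) + (\<Sum>n. ?a F2 n)"
    and "summable (\<lambda>n. ?a F1 n + ?a F2 n)"
    by (auto intro: suminf_add[symmetric] summable_add)
  with sum_eq assms
  show "poisson_expect lam (\<lambda>n xs. F1 n xs + F2 n xs) = poisson_expect lam F1 + poisson_expect lam F2"
    and "poisson_summable lam (\<lambda>n xs. F1 n xs + F2 n xs)"
    unfolding poisson_expect_def poisson_summable_def by (simp_all add: distrib_left)
qed

definition config_shuffle ::
    "nat \<Rightarrow> nat \<Rightarrow> (nat \<Rightarrow> nat) \<Rightarrow> (nat \<Rightarrow> segment) \<times> (nat \<Rightarrow> segment) \<Rightarrow> nat \<Rightarrow> segment" where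
  "config_shuffle k m \<tau> p = (\<lambda>j\<in>{..<k + m}. config_append k (fst p) (snd p) (\<tau> j))"

locale segment_intensity =
  fixes lam :: "segment measure" and b :: real
  assumes finite_lam: "finite_measure lam"
    and sets_lam: "sets lam = sets borel"
    and AE_short: "AE y in lam. y \<in> short_segs b"
begin

abbreviation P :: "nat \<Rightarrow> (nat \<Rightarrow> segment) measure" where
  "P k \<equiv> PiM {..<k} (\<lambda>_. lam)"

abbreviation mass :: real where
  "mass \<equiv> measure lam (space lam)"

lemma space_lam: "space lam = UNIV"
  using sets_eq_imp_space_eq[OF sets_lam] by simp

sublocale product_sigma_finite "\<lambda>_ :: nat. lam"
  using finite_lam by (simp add: product_sigma_finite_def finite_measure.sigma_finite_measure)

lemma sigma_finite_P: "sigma_finite_measure (P k)"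
proof -
  interpret finite_product_sigma_finite "\<lambda>_ :: nat. lam" "{..<k}"
    by (simp add: finite_product_sigma_finite_def finite_product_sigma_finite_axioms_def
        product_sigma_finite_axioms)
  show ?thesis
    by (rule sigma_finite_measure_axioms)
qed

lemma space_P: "space (P k) = {..<k} \<rightarrow>\<^sub>E UNIV"
  by (simp add: space_PiM space_lam)

lemma emeasure_space_P: "emeasure (P k) (space (P k)) = ennreal (mass ^ k)"
proof -
  have "emeasure (P k) ({..<k} \<rightarrow>\<^sub>E space lam) = (\<Prod>i<k. emeasure lam (space lam))"
    by (rule emeasure_PiM) auto
  then show ?thesis
    using finite_lam by (simp add: space_PiM finite_measure.emeasure_eq_measure ennreal_power)
qed

lemma finite_measure_P: "finite_measure (P k)"
  by (rule finite_measureI) (simp add: emeasure_space_P)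

lemma measure_space_P: "measure (P k) (space (P k)) = mass ^ k"
  by (simp add: measure_def emeasure_space_P)

lemma measurable_lam_iff: "measurable M lam = measurable M borel"
  by (rule measurable_cong_sets[OF refl sets_lam])

lemma measurable_len: "f \<in> measurable M lam \<Longrightarrow> (\<lambda>x. len (f x)) \<in> borel_measurable M"
  using measurable_compose[OF _ borel_measurable_len] measurable_lam_iff by blast

lemma measurable_ind:
  assumes "f \<in> measurable M lam" "g \<in> measurable M lam"
  shows "(\<lambda>x. ind (f x) (g x)) \<in> borel_measurable M"
proof -
  have "(\<lambda>x. (f x, g x)) \<in> measurable M (borel \<Otimes>\<^sub>M borel)"
    using assms measurable_lam_iff by (intro measurable_Pair) auto
  then have "(\<lambda>x. (f x, g x)) \<in> measurable M borel"
    by (simp add: borel_prod)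
  from measurable_compose[OF this borel_measurable_ind] show ?thesis
    by simp
qed

lemma measurable_component:
  "i < n \<Longrightarrow> f \<in> measurable M (P n) \<Longrightarrow> (\<lambda>x. f x i) \<in> measurable M lam"
  by (rule measurable_compose[OF _ measurable_component_singleton]) auto

lemma measurable_Gexp:
  assumes f: "f \<in> measurable M (P n)"
  shows "(\<lambda>x. Gexp \<nu>1 \<nu>2 n (f x)) \<in> borel_measurable M"
proof -
  have L: "(\<lambda>x. Lc n (f x)) \<in> borel_measurable M"
    unfolding Lc_def by (intro borel_measurable_sum measurable_len measurable_component[OF _ f]) auto
  have "(\<lambda>x. if i \<noteq> j then ind (f x i) (f x j) else 0) \<in> borel_measurable M"
    if "i < n" "j < n" for i j
    using that by (cases "i = j") (auto intro!: measurable_ind measurable_component[OF _ f])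
  then have N: "(\<lambda>x. Nc n (f x)) \<in> borel_measurable M"
    unfolding Nc_def by (intro borel_measurable_times borel_measurable_const borel_measurable_sum) auto
  show ?thesis
    unfolding Gexp_def by (intro measurable_compose[OF _ borel_measurable_exp] borel_measurable_add
        borel_measurable_times borel_measurable_const L N)
qed

lemma measurable_calE:
  assumes f: "f \<in> measurable M (P n)" and g: "g \<in> measurable M (P m)"
  shows "(\<lambda>x. calE \<nu>1 \<nu>2 n (f x) m (g x)) \<in> borel_measurable M"
proof -
  have L: "(\<lambda>x. \<Sum>i<m. len (g x i)) \<in> borel_measurable M"
    by (intro borel_measurable_sum measurable_len measurable_component[OF _ g]) auto
  have I: "(\<lambda>x. \<Sum>i<m. \<Sum>s<n. ind (f x s) (g x i)) \<in> borel_measurable M"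
    by (intro borel_measurable_sum measurable_ind measurable_component[OF _ g]
        measurable_component[OF _ f]) auto
  have "(\<lambda>x. if i < j then ind (g x i) (g x j) else 0) \<in> borel_measurable M"
    if "i < m" "j < m" for i j
    using that by (cases "i < j") (auto intro!: measurable_ind measurable_component[OF _ g])
  then have J: "(\<lambda>x. \<Sum>i<m. \<Sum>j<m. if i < j then ind (g x i) (g x j) else 0) \<in> borel_measurable M"
    by (intro borel_measurable_sum) auto
  show ?thesis
    unfolding calE_def by (intro measurable_compose[OF _ borel_measurable_exp] borel_measurable_add
        borel_measurable_times borel_measurable_const L I J)
qed

lemma AE_short_config: "AE xs in P n. \<forall>i\<in>{..<n}. xs i \<in> short_segs b"
proof (rule AE_finite_allI)
  fix i assume i: "i \<in> {..<n}"
  obtain N where N: "{y \<in> space lam. y \<notin> short_segs b} \<subseteq> N" "emeasure lam N = 0" "N \<in> sets lam"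
    using AE_short by (rule AE_E)
  let ?C = "\<Pi>\<^sub>E j\<in>{..<n}. if j = i then N else space lam"
  have "emeasure (P n) ?C = (\<Prod>j<n. emeasure lam (if j = i then N else space lam))"
    using N by (intro emeasure_PiM) auto
  also have "\<dots> = 0"
    using i N by (intro prod_zero) (auto intro!: bexI[of _ i])
  finally have "?C \<in> null_sets (P n)"
    using N by (auto intro!: sets_PiM_I_finite)
  moreover have "{xs \<in> space (P n). xs i \<notin> short_segs b} \<subseteq> ?C"
    using N i by (auto simp: space_P space_lam PiE_def Pi_def)
  ultimately show "AE xs in P n. xs i \<in> short_segs b"
    by (rule AE_I')
qed simp

lemma integrable_P_if_bounded_on_short:
  fixes f :: "(nat \<Rightarrow> segment) \<Rightarrow> real"
  assumes "f \<in> borel_measurable (P n)"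
    and "\<And>xs. (\<And>i. i < n \<Longrightarrow> xs i \<in> short_segs b) \<Longrightarrow> \<bar>f xs\<bar> \<le> C"
  shows "integrable (P n) f"
proof -
  interpret finite_measure "P n"
    by (rule finite_measure_P)
  have "AE xs in P n. norm (f xs) \<le> C"
    using AE_short_config[of n] by eventually_elim (simp add: assms(2))
  then show ?thesis
    using assms(1) by (rule integrable_const_bound)
qed

lemma integral_P_1:
  fixes f :: "segment \<Rightarrow> real"
  assumes "f \<in> borel_measurable lam"
  shows "(\<integral>ys. f (ys 0) \<partial>P 1) = (\<integral>y. f y \<partial>lam)"
  using product_integral_singleton[OF assms, of 0] by (simp add: lessThan_Suc)

lemma measurable_config_shuffle:
  assumes "\<tau> \<in> {..<k + m} \<rightarrow> {..<k + m}"
  shows "config_shuffle k m \<tau> \<in> measurable (P k \<Otimes>\<^sub>M P m) (P (k + m))"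
  unfolding config_shuffle_def
proof (rule measurable_restrict)
  fix j assume "j \<in> {..<k + m}"
  then have "\<tau> j < k + m"
    using assms by auto
  then show "(\<lambda>p. config_append k (fst p) (snd p) (\<tau> j)) \<in> measurable (P k \<Otimes>\<^sub>M P m) lam"
    by (cases "\<tau> j < k")
      (auto simp: config_append_def intro!: measurable_component[OF _ measurable_fst]
        measurable_component[OF _ measurable_snd])
qed

end

context segment_intensity
begin

lemma config_shuffle_vimage_PiE:
  assumes \<tau>: "bij_betw \<tau> {..<k + m} {..<k + m}"
  defines "\<tau>' \<equiv> inv_into {..<k + m} \<tau>"
  shows "config_shuffle k m \<tau> -` (\<Pi>\<^sub>E j\<in>{..<k + m}. A j) \<inter> space (P k \<Otimes>\<^sub>M P m) =
    (\<Pi>\<^sub>E i\<in>{..<k}. A (\<tau>' i)) \<times> (\<Pi>\<^sub>E i\<in>{..<m}. A (\<tau>' (k + i)))"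
proof -
  have \<tau>': "bij_betw \<tau>' {..<k + m} {..<k + m}"
    unfolding \<tau>'_def using \<tau> by (rule bij_betw_inv_into)
  have \<tau>'_\<tau>: "\<tau>' (\<tau> j) = j" if "j < k + m" for j
    unfolding \<tau>'_def using \<tau> that by (simp add: bij_betw_def inv_into_f_f)
  have shuffle_iff: "config_shuffle k m \<tau> (xs, ys) \<in> (\<Pi>\<^sub>E j\<in>{..<k + m}. A j) \<longleftrightarrow>
      (\<forall>i<k + m. config_append k xs ys i \<in> A (\<tau>' i))" for xs ys
  proof -
    have "(\<forall>j\<in>{..<k + m}. config_append k xs ys (\<tau> j) \<in> A j) \<longleftrightarrow>
        (\<forall>j\<in>{..<k + m}. config_append k xs ys (\<tau> j) \<in> A (\<tau>' (\<tau> j)))"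
      by (simp add: \<tau>'_\<tau>)
    also have "\<dots> \<longleftrightarrow> (\<forall>i\<in>\<tau> ` {..<k + m}. config_append k xs ys i \<in> A (\<tau>' i))"
      by (simp add: Ball_image_comp)
    also have "\<dots> \<longleftrightarrow> (\<forall>i<k + m. config_append k xs ys i \<in> A (\<tau>' i))"
      using bij_betw_imp_surj_on[OF \<tau>] by auto
    finally show ?thesis
      by (simp add: config_shuffle_def PiE_iff)
  qed
  have append_iff: "(\<forall>i<k + m. config_append k xs ys i \<in> A (\<tau>' i)) \<longleftrightarrow>
      (\<forall>i<k. xs i \<in> A (\<tau>' i)) \<and> (\<forall>i<m. ys i \<in> A (\<tau>' (k + i)))" for xs ys
  proof (intro iffI conjI allI impI)
    fix i assume "\<forall>i<k + m. config_append k xs ys i \<in> A (\<tau>' i)"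
    then show "i < k \<Longrightarrow> xs i \<in> A (\<tau>' i)" and "i < m \<Longrightarrow> ys i \<in> A (\<tau>' (k + i))"
      by (auto simp: config_append_def dest: spec[of _ i] spec[of _ "k + i"])
  next
    fix i assume "(\<forall>i<k. xs i \<in> A (\<tau>' i)) \<and> (\<forall>i<m. ys i \<in> A (\<tau>' (k + i)))" "i < k + m"
    then show "config_append k xs ys i \<in> A (\<tau>' i)"
      by (auto simp: config_append_def dest: spec[of _ "i - k"])
  qed
  show ?thesis
  proof (intro set_eqI)
    fix p :: "(nat \<Rightarrow> segment) \<times> (nat \<Rightarrow> segment)"
    obtain xs ys where p: "p = (xs, ys)"
      by (cases p)
    show "p \<in> config_shuffle k m \<tau> -` (\<Pi>\<^sub>E j\<in>{..<k + m}. A j) \<inter> space (P k \<Otimes>\<^sub>M P m) \<longleftrightarrow>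
        p \<in> (\<Pi>\<^sub>E i\<in>{..<k}. A (\<tau>' i)) \<times> (\<Pi>\<^sub>E i\<in>{..<m}. A (\<tau>' (k + i)))"
      unfolding p by (simp add: space_pair_measure space_P shuffle_iff append_iff) (auto simp: PiE_iff)
  qed
qed

lemma distr_config_shuffle:
  assumes \<tau>: "bij_betw \<tau> {..<k + m} {..<k + m}"
  shows "distr (P k \<Otimes>\<^sub>M P m) (P (k + m)) (config_shuffle k m \<tau>) = P (k + m)"
proof (rule PiM_eqI)
  fix A assume A: "\<And>i. i \<in> {..<k + m} \<Longrightarrow> A i \<in> sets lam"
  define \<tau>' where "\<tau>' = inv_into {..<k + m} \<tau>"
  have \<tau>': "bij_betw \<tau>' {..<k + m} {..<k + m}"
    unfolding \<tau>'_def using \<tau> by (rule bij_betw_inv_into)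
  then have A\<tau>': "i < k + m \<Longrightarrow> A (\<tau>' i) \<in> sets lam" for i
    using A by (auto simp: bij_betw_def)
  have "config_shuffle k m \<tau> \<in> measurable (P k \<Otimes>\<^sub>M P m) (P (k + m))"
    using \<tau> by (intro measurable_config_shuffle) (auto simp: bij_betw_def)
  then have "emeasure (distr (P k \<Otimes>\<^sub>M P m) (P (k + m)) (config_shuffle k m \<tau>)) (\<Pi>\<^sub>E j\<in>{..<k + m}. A j) =
      emeasure (P k \<Otimes>\<^sub>M P m) ((\<Pi>\<^sub>E i\<in>{..<k}. A (\<tau>' i)) \<times> (\<Pi>\<^sub>E i\<in>{..<m}. A (\<tau>' (k + i))))"
    using A by (simp add: emeasure_distr sets_PiM_I_finite config_shuffle_vimage_PiE[OF \<tau>] \<tau>'_def)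
  also have "\<dots> = emeasure (P k) (\<Pi>\<^sub>E i\<in>{..<k}. A (\<tau>' i)) * emeasure (P m) (\<Pi>\<^sub>E i\<in>{..<m}. A (\<tau>' (k + i)))"
    using A\<tau>' by (intro sigma_finite_measure.emeasure_pair_measure_Times[OF sigma_finite_P]
        sets_PiM_I_finite) auto
  also have "\<dots> = (\<Prod>i<k. emeasure lam (A (\<tau>' i))) * (\<Prod>i<m. emeasure lam (A (\<tau>' (k + i))))"
    using A\<tau>' by (subst (1 2) emeasure_PiM) auto
  also have "\<dots> = (\<Prod>i<k + m. emeasure lam (A (\<tau>' i)))"
    by (rule prod.lessThan_add[symmetric])
  also have "\<dots> = (\<Prod>j<k + m. emeasure lam (A j))"
    by (rule prod.reindex_bij_betw[OF \<tau>'])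
  finally show "emeasure (distr (P k \<Otimes>\<^sub>M P m) (P (k + m)) (config_shuffle k m \<tau>)) (\<Pi>\<^sub>E j\<in>{..<k + m}. A j) =
      (\<Prod>j\<in>{..<k + m}. emeasure lam (A j))" .
qed simp_all

end

section \<open>The Gibbs weight\<close>

locale segment_gibbs = segment_intensity +
  fixes \<nu>1 \<nu>2 :: real
  assumes \<nu>2_nonpos: "\<nu>2 \<le> 0"
begin

definition growth :: real where
  "growth = exp (\<bar>\<nu>1\<bar> * b)"

lemma Gexp_bounds:
  assumes "\<And>i. i < n \<Longrightarrow> xs i \<in> short_segs b"
  shows "0 < Gexp \<nu>1 \<nu>2 n xs" "Gexp \<nu>1 \<nu>2 n xs \<le> growth ^ n"
proof -
  have "Gexp \<nu>1 \<nu>2 n xs \<le> exp (\<bar>\<nu>1\<bar> * (n * b))"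
    using \<nu>2_nonpos assms by (rule Gexp_le)
  then show "Gexp \<nu>1 \<nu>2 n xs \<le> growth ^ n"
    by (simp add: growth_def exp_of_nat_mult[symmetric] ac_simps)
qed (simp add: Gexp_def)

lemma calE_bounds:
  assumes "\<And>i. i < m \<Longrightarrow> ys i \<in> short_segs b"
  shows "0 < calE \<nu>1 \<nu>2 n xs m ys" "calE \<nu>1 \<nu>2 n xs m ys \<le> growth ^ m"
proof -
  have "calE \<nu>1 \<nu>2 n xs m ys \<le> exp (\<bar>\<nu>1\<bar> * (m * b))"
    using \<nu>2_nonpos assms by (rule calE_le)
  then show "calE \<nu>1 \<nu>2 n xs m ys \<le> growth ^ m"
    by (simp add: growth_def exp_of_nat_mult[symmetric] ac_simps)
qed (simp add: calE_def)

definition calE_integral :: "nat \<Rightarrow> (nat \<Rightarrow> segment) \<Rightarrow> nat \<Rightarrow> real" where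
  "calE_integral m ys k = (\<integral>xs. calE \<nu>1 \<nu>2 k xs m ys * Gexp \<nu>1 \<nu>2 k xs \<partial>P k)"

lemma poisson_expect_calE:
  "poisson_expect lam (\<lambda>n xs. calE \<nu>1 \<nu>2 n xs m ys * Gexp \<nu>1 \<nu>2 n xs) =
     exp (- mass) * (\<Sum>k. 1 / fact k * calE_integral m ys k)"
  by (simp add: poisson_expect_def calE_integral_def)

lemma measurable_calE_integral: "(\<lambda>ys. calE_integral m ys k) \<in> borel_measurable (P m)"
proof -
  have "(\<lambda>(ys, xs). calE \<nu>1 \<nu>2 k xs m ys * Gexp \<nu>1 \<nu>2 k xs) \<in> borel_measurable (P m \<Otimes>\<^sub>M P k)"
    unfolding case_prod_beta
    by (intro borel_measurable_times measurable_calE measurable_Gexp measurable_fst measurable_snd)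
  then show ?thesis
    unfolding calE_integral_def by (rule sigma_finite_measure.borel_measurable_lebesgue_integral[OF sigma_finite_P])
qed

lemma measurable_poisson_expect_calE:
  "(\<lambda>ys. poisson_expect lam (\<lambda>n xs. calE \<nu>1 \<nu>2 n xs m ys * Gexp \<nu>1 \<nu>2 n xs)) \<in> borel_measurable (P m)"
  unfolding poisson_expect_calE
  by (intro borel_measurable_times borel_measurable_const borel_measurable_suminf measurable_calE_integral)

lemma abs_calE_integral_le:
  assumes short: "\<And>i. i < m \<Longrightarrow> ys i \<in> short_segs b"
  shows "\<bar>1 / fact k * calE_integral m ys k\<bar> \<le> growth ^ m * (inverse (fact k) * (growth * mass) ^ k)"
proof -
  interpret finite_measure "P k"
    by (rule finite_measure_P)
  have "(\<lambda>xs. calE \<nu>1 \<nu>2 k xs m ys * Gexp \<nu>1 \<nu>2 k xs) \<in> borel_measurable (P k)"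
  proof -
    have "calE \<nu>1 \<nu>2 k xs m ys = calE \<nu>1 \<nu>2 k xs m (\<lambda>i\<in>{..<m}. ys i)" for xs
      by (rule calE_cong) auto
    moreover have "(\<lambda>i\<in>{..<m}. ys i) \<in> space (P m)"
      by (simp add: space_P)
    ultimately show ?thesis
      by (simp only:) (intro borel_measurable_times measurable_calE measurable_Gexp measurable_ident_sets
          measurable_const; simp)
  qed
  moreover have "AE xs in P k. \<bar>calE \<nu>1 \<nu>2 k xs m ys * Gexp \<nu>1 \<nu>2 k xs\<bar> \<le> growth ^ m * growth ^ k"
    using AE_short_config[of k]
  proof eventually_elim
    case (elim xs)
    then have "0 < Gexp \<nu>1 \<nu>2 k xs" "Gexp \<nu>1 \<nu>2 k xs \<le> growth ^ k"
      by (simp_all add: Gexp_bounds)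
    moreover have "0 < calE \<nu>1 \<nu>2 k xs m ys"
      using short by (rule calE_bounds)
    moreover have "calE \<nu>1 \<nu>2 k xs m ys \<le> growth ^ m"
      using short by (rule calE_bounds)
    ultimately show ?case
      by (simp add: abs_mult mult_mono less_imp_le)
  qed
  ultimately have "\<bar>calE_integral m ys k\<bar> \<le> growth ^ m * growth ^ k * mass ^ k"
    unfolding calE_integral_def by (auto dest: abs_integral_le_const_bound simp: measure_space_P)
  then show ?thesis
    by (simp add: abs_mult field_simps power_mult_distrib)
qed

lemma summable_calE_integral:
  assumes "\<And>i. i < m \<Longrightarrow> ys i \<in> short_segs b"
  shows "summable (\<lambda>k. \<bar>1 / fact k * calE_integral m ys k\<bar>)"
proof -
  have "\<bar>1 / fact k * calE_integral m ys k\<bar> \<le> growth ^ m * (inverse (fact k) * (growth * mass) ^ k)" for k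
    using assms by (rule abs_calE_integral_le)
  then show ?thesis
    by (intro summable_comparison_test'[OF summable_mult[OF summable_exp[of "growth * mass"], of "growth ^ m"],
          of 0]) simp
qed

end

section \<open>The Mecke formula for sums over injective tuples\<close>

lemma gibbs_expect_add:
  assumes "poisson_summable lam (\<lambda>n xs. F1 n xs * Gexp \<nu>1 \<nu>2 n xs)"
    and "poisson_summable lam (\<lambda>n xs. F2 n xs * Gexp \<nu>1 \<nu>2 n xs)"
  shows "gibbs_expect lam \<nu>1 \<nu>2 (\<lambda>n xs. F1 n xs + F2 n xs) = gibbs_expect lam \<nu>1 \<nu>2 F1 + gibbs_expect lam \<nu>1 \<nu>2 F2"
    and "poisson_summable lam (\<lambda>n xs. (F1 n xs + F2 n xs) * Gexp \<nu>1 \<nu>2 n xs)"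
  using poisson_expect_add[OF assms]
  by (simp_all add: gibbs_expect_def distrib_right add_divide_distrib)

context segment_intensity
begin

lemma measurable_coordinate: "i < m \<Longrightarrow> (\<lambda>ys. ys i) \<in> measurable (P m) lam"
  using measurable_component[OF _ measurable_ident_sets[OF refl]] by simp

definition local_bounded_fun :: "nat \<Rightarrow> ((nat \<Rightarrow> segment) \<Rightarrow> real) \<Rightarrow> bool" where
  "local_bounded_fun m g \<longleftrightarrow> g \<in> borel_measurable (P m) \<and>
     (\<exists>C. \<forall>ys. (\<forall>i<m. ys i \<in> short_segs b) \<longrightarrow> \<bar>g ys\<bar> \<le> C) \<and>
     (\<forall>ys ys'. (\<forall>i<m. ys i = ys' i) \<longrightarrow> g ys = g ys')"

lemma local_bounded_funI:
  assumes "g \<in> borel_measurable (P m)"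
    and "\<And>ys. (\<And>i. i < m \<Longrightarrow> ys i \<in> short_segs b) \<Longrightarrow> \<bar>g ys\<bar> \<le> C"
    and "\<And>ys ys'. (\<And>i. i < m \<Longrightarrow> ys i = ys' i) \<Longrightarrow> g ys = g ys'"
  shows "local_bounded_fun m g"
  using assms unfolding local_bounded_fun_def by blast

lemma local_bounded_funD:
  assumes "local_bounded_fun m g"
  shows "g \<in> borel_measurable (P m)"
    and "\<exists>C. \<forall>ys. (\<forall>i<m. ys i \<in> short_segs b) \<longrightarrow> \<bar>g ys\<bar> \<le> C"
    and "(\<And>i. i < m \<Longrightarrow> ys i = ys' i) \<Longrightarrow> g ys = g ys'"
  using assms unfolding local_bounded_fun_def by auto

lemma local_bounded_fun_const: "local_bounded_fun m (\<lambda>_. c)"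
  by (rule local_bounded_funI[where C = "\<bar>c\<bar>"]) auto

lemma local_bounded_fun_len: "i < m \<Longrightarrow> local_bounded_fun m (\<lambda>ys. len (ys i))"
  by (rule local_bounded_funI[where C = b]) (auto intro: measurable_len measurable_coordinate simp: short_segs_def)

lemma local_bounded_fun_ind:
  assumes "i < m" "j < m"
  shows "local_bounded_fun m (\<lambda>ys. ind (ys i) (ys j))"
proof (rule local_bounded_funI[where C = 1])
  show "(\<lambda>ys. ind (ys i) (ys j)) \<in> borel_measurable (P m)"
    using assms by (intro measurable_ind measurable_coordinate)
qed (use assms in \<open>simp_all add: ind_def\<close>)

lemma local_bounded_fun_mult:
  assumes "local_bounded_fun m f" "local_bounded_fun m g"
  shows "local_bounded_fun m (\<lambda>ys. f ys * g ys)"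
proof -
  obtain C D where C: "\<forall>ys. (\<forall>i<m. ys i \<in> short_segs b) \<longrightarrow> \<bar>f ys\<bar> \<le> C"
    and D: "\<forall>ys. (\<forall>i<m. ys i \<in> short_segs b) \<longrightarrow> \<bar>g ys\<bar> \<le> D"
    using local_bounded_funD(2)[OF assms(1)] local_bounded_funD(2)[OF assms(2)] by blast
  show ?thesis
  proof (rule local_bounded_funI[where C = "C * D"])
    fix ys assume "\<And>i. i < m \<Longrightarrow> ys i \<in> short_segs b"
    then have "\<bar>f ys\<bar> \<le> C" "\<bar>g ys\<bar> \<le> D"
      using C D by auto
    then show "\<bar>f ys * g ys\<bar> \<le> C * D"
      unfolding abs_mult by (intro mult_mono) auto
  next
    show "(\<lambda>ys. f ys * g ys) \<in> borel_measurable (P m)"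
      using local_bounded_funD(1)[OF assms(1)] local_bounded_funD(1)[OF assms(2)] by (rule borel_measurable_times)
  next
    fix ys ys' :: "nat \<Rightarrow> segment" assume "\<And>i. i < m \<Longrightarrow> ys i = ys' i"
    then show "f ys * g ys = f ys' * g ys'"
      using local_bounded_funD(3)[OF assms(1)] local_bounded_funD(3)[OF assms(2)] by metis
  qed
qed

lemma local_bounded_fun_power:
  assumes "local_bounded_fun m g"
  shows "local_bounded_fun m (\<lambda>ys. (g ys) ^ n)"
proof (induction n)
  case (Suc n)
  then show ?case
    using local_bounded_fun_mult[OF assms Suc] by simp
qed (simp add: local_bounded_fun_const)

end

context segment_gibbs
begin

context
  fixes m :: nat and g :: "(nat \<Rightarrow> segment) \<Rightarrow> real"
  assumes g: "local_bounded_fun m g"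
begin

lemma measurable_g_comp:
  assumes "\<And>i. i < m \<Longrightarrow> \<sigma> i < n"
  shows "(\<lambda>xs. g (\<lambda>i. xs (\<sigma> i))) \<in> borel_measurable (P n)"
proof -
  have "(\<lambda>xs. \<lambda>i\<in>{..<m}. xs (\<sigma> i)) \<in> measurable (P n) (P m)"
    using assms by (intro measurable_restrict measurable_component_singleton) auto
  from measurable_compose[OF this local_bounded_funD(1)[OF g]]
  show ?thesis
    by (simp add: local_bounded_funD(3)[OF g, of "\<lambda>i\<in>{..<m}. _ i"] cong: measurable_cong)
qed

lemma integrable_g_comp_Gexp:
  assumes \<sigma>: "\<And>i. i < m \<Longrightarrow> \<sigma> i < n"
  shows "integrable (P n) (\<lambda>xs. g (\<lambda>i. xs (\<sigma> i)) * Gexp \<nu>1 \<nu>2 n xs)"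
proof -
  obtain C where C: "\<forall>ys. (\<forall>i<m. ys i \<in> short_segs b) \<longrightarrow> \<bar>g ys\<bar> \<le> C"
    using local_bounded_funD(2)[OF g] by blast
  show ?thesis
  proof (rule integrable_P_if_bounded_on_short)
    show "(\<lambda>xs. g (\<lambda>i. xs (\<sigma> i)) * Gexp \<nu>1 \<nu>2 n xs) \<in> borel_measurable (P n)"
      by (intro borel_measurable_times measurable_g_comp measurable_Gexp measurable_ident_sets \<sigma>) simp_all
    fix xs assume short: "\<And>i. i < n \<Longrightarrow> xs i \<in> short_segs b"
    have "\<bar>g (\<lambda>i. xs (\<sigma> i))\<bar> \<le> C"
      using short \<sigma> C by auto
    moreover have "0 < Gexp \<nu>1 \<nu>2 n xs"
      using short by (rule Gexp_bounds)
    moreover have "Gexp \<nu>1 \<nu>2 n xs \<le> growth ^ n"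
      using short by (rule Gexp_bounds)
    ultimately show "\<bar>g (\<lambda>i. xs (\<sigma> i)) * Gexp \<nu>1 \<nu>2 n xs\<bar> \<le> C * growth ^ n"
      unfolding abs_mult by (intro mult_mono) auto
  qed
qed

text \<open>Here the Gibbs weight factorises as \<open>p(x \<union> y) = p(x) \<E>\<^sub>x(y)\<close>, after a permutation
  has moved the points picked by \<open>\<sigma>\<close> to the end of the configuration.\<close>

lemma g_Gexp_config_shuffle:
  assumes \<tau>: "bij_betw \<tau> {..<k + m} {..<k + m}" and \<tau>_\<sigma>: "\<And>i. i < m \<Longrightarrow> \<tau> (\<sigma> i) = k + i"
    and \<sigma>: "\<And>i. i < m \<Longrightarrow> \<sigma> i < k + m"
  shows "g (\<lambda>i. config_shuffle k m \<tau> p (\<sigma> i)) * Gexp \<nu>1 \<nu>2 (k + m) (config_shuffle k m \<tau> p) =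
    g (snd p) * (Gexp \<nu>1 \<nu>2 k (fst p) * calE \<nu>1 \<nu>2 k (fst p) m (snd p))"
proof -
  obtain xs ys where p: "p = (xs, ys)"
    by (cases p)
  have "g (\<lambda>i. config_shuffle k m \<tau> p (\<sigma> i)) = g ys"
    by (rule local_bounded_funD(3)[OF g]) (simp add: config_shuffle_def p \<sigma> \<tau>_\<sigma> config_append_def)
  moreover have "Gexp \<nu>1 \<nu>2 (k + m) (config_shuffle k m \<tau> p) = Gexp \<nu>1 \<nu>2 (k + m) (\<lambda>j. config_append k xs ys (\<tau> j))"
    by (rule Gexp_cong) (simp add: config_shuffle_def p)
  ultimately show ?thesis
    by (simp add: p Gexp_permute[OF \<tau>] Gexp_append)
qed

definition append_integral :: "nat \<Rightarrow> real" where
  "append_integral k =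
     (\<integral>p. g (snd p) * (Gexp \<nu>1 \<nu>2 k (fst p) * calE \<nu>1 \<nu>2 k (fst p) m (snd p)) \<partial>(P k \<Otimes>\<^sub>M P m))"

lemma integral_comp_injection:
  assumes "\<sigma> \<in> injections m (k + m)"
  shows "integrable (P k \<Otimes>\<^sub>M P m) (\<lambda>p. g (snd p) * (Gexp \<nu>1 \<nu>2 k (fst p) * calE \<nu>1 \<nu>2 k (fst p) m (snd p)))"
    and "(\<integral>xs. g (\<lambda>i. xs (\<sigma> i)) * Gexp \<nu>1 \<nu>2 (k + m) xs \<partial>P (k + m)) = append_integral k"
proof -
  obtain \<tau> where \<tau>: "bij_betw \<tau> {..<k + m} {..<k + m}" and \<tau>_\<sigma>: "\<And>i. i < m \<Longrightarrow> \<tau> (\<sigma> i) = k + i"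
    using injection_extends_to_permutation[OF assms] by blast
  have \<sigma>: "\<And>i. i < m \<Longrightarrow> \<sigma> i < k + m"
    using assms by (auto simp: injections_def)
  let ?F = "\<lambda>xs. g (\<lambda>i. xs (\<sigma> i)) * Gexp \<nu>1 \<nu>2 (k + m) xs"
  have F_measurable: "?F \<in> borel_measurable (P (k + m))"
    by (intro borel_measurable_times measurable_g_comp measurable_Gexp measurable_ident_sets \<sigma>) simp_all
  have shuffle_measurable: "config_shuffle k m \<tau> \<in> measurable (P k \<Otimes>\<^sub>M P m) (P (k + m))"
    using \<tau> by (intro measurable_config_shuffle) (auto simp: bij_betw_def)
  note shuffle = g_Gexp_config_shuffle[OF \<tau> \<tau>_\<sigma> \<sigma>] distr_config_shuffle[OF \<tau>]
  show "integrable (P k \<Otimes>\<^sub>M P m) (\<lambda>p. g (snd p) * (Gexp \<nu>1 \<nu>2 k (fst p) * calE \<nu>1 \<nu>2 k (fst p) m (snd p)))"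
    using integrable_g_comp_Gexp[OF \<sigma>] integrable_distr_eq[OF shuffle_measurable F_measurable]
    by (simp add: shuffle)
  show "(\<integral>xs. ?F xs \<partial>P (k + m)) = append_integral k"
    using integral_distr[OF shuffle_measurable F_measurable] by (simp add: shuffle append_integral_def)
qed

lemma append_integral_eq: "append_integral k = (\<integral>ys. g ys * calE_integral m ys k \<partial>P m)"
proof -
  interpret pair_sigma_finite "P k" "P m"
    by (simp add: pair_sigma_finite_def sigma_finite_P)
  have "(\<lambda>i\<in>{..<m}. k + i) \<in> injections m (k + m)"
    by (auto simp: injections_def inj_on_def)
  then have "integrable (P k \<Otimes>\<^sub>M P m) (\<lambda>(xs, ys). g ys * (Gexp \<nu>1 \<nu>2 k xs * calE \<nu>1 \<nu>2 k xs m ys))"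
    unfolding case_prod_beta by (rule integral_comp_injection(1))
  from integral_snd[OF this] show ?thesis
    unfolding append_integral_def calE_integral_def case_prod_beta by (simp add: ac_simps)
qed

lemma integral_sum_injections:
  "1 / fact n * (\<integral>xs. (\<Sum>\<sigma>\<in>injections m n. g (\<lambda>i. xs (\<sigma> i))) * Gexp \<nu>1 \<nu>2 n xs \<partial>P n) =
     (if m \<le> n then append_integral (n - m) / fact (n - m) else 0)"
proof (cases "m \<le> n")
  case True
  define k where "k = n - m"
  have n: "n = k + m"
    using True by (simp add: k_def)
  have "(\<integral>xs. (\<Sum>\<sigma>\<in>injections m n. g (\<lambda>i. xs (\<sigma> i))) * Gexp \<nu>1 \<nu>2 n xs \<partial>P n) =
      (\<Sum>\<sigma>\<in>injections m n. (\<integral>xs. g (\<lambda>i. xs (\<sigma> i)) * Gexp \<nu>1 \<nu>2 n xs \<partial>P n))"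
    unfolding sum_distrib_right
    by (intro Bochner_Integration.integral_sum integrable_g_comp_Gexp) (auto simp: injections_def)
  also have "\<dots> = card (injections m n) * append_integral k"
    unfolding n by (simp add: integral_comp_injection(2))
  also have "real (card (injections m n)) = fact n / fact k"
  proof -
    have "real (card (injections m n)) * fact k = fact n"
      using card_injections[OF True] unfolding k_def by (metis of_nat_fact of_nat_mult)
    then show ?thesis
      by (simp add: field_simps)
  qed
  finally show ?thesis
    using True by (simp add: k_def)
qed (simp add: injections_empty)

definition series_term :: "nat \<Rightarrow> (nat \<Rightarrow> segment) \<Rightarrow> real" where
  "series_term k ys = g ys * (1 / fact k * calE_integral m ys k)"

lemma measurable_series_term: "series_term k \<in> borel_measurable (P m)"
  unfolding series_term_def[abs_def]
  by (intro borel_measurable_times local_bounded_funD(1)[OF g] borel_measurable_const measurable_calE_integral)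

lemma abs_series_term_le:
  assumes C: "\<forall>ys. (\<forall>i<m. ys i \<in> short_segs b) \<longrightarrow> \<bar>g ys\<bar> \<le> C"
    and short: "\<And>i. i < m \<Longrightarrow> ys i \<in> short_segs b"
  shows "\<bar>series_term k ys\<bar> \<le> C * growth ^ m * (inverse (fact k) * (growth * mass) ^ k)"
proof -
  have "\<bar>g ys\<bar> \<le> C"
    using short C by auto
  moreover have "\<bar>1 / fact k * calE_integral m ys k\<bar> \<le> growth ^ m * (inverse (fact k) * (growth * mass) ^ k)"
    using short by (rule abs_calE_integral_le)
  ultimately have "\<bar>g ys\<bar> * \<bar>1 / fact k * calE_integral m ys k\<bar> \<le>
      C * (growth ^ m * (inverse (fact k) * (growth * mass) ^ k))"
    using abs_ge_zero[of "g ys"] by (intro mult_mono) auto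
  then show ?thesis
    by (simp only: series_term_def abs_mult mult.assoc)
qed

lemma AE_summable_series_term: "AE ys in P m. summable (\<lambda>k. norm (series_term k ys))"
  using AE_short_config[of m]
proof eventually_elim
  case (elim ys)
  then have "summable (\<lambda>k. \<bar>1 / fact k * calE_integral m ys k\<bar>)"
    by (intro summable_calE_integral) simp
  then show ?case
    unfolding series_term_def real_norm_def abs_mult by (rule summable_mult)
qed

lemma summable_integral_series_term: "summable (\<lambda>k. \<integral>ys. norm (series_term k ys) \<partial>P m)"
proof -
  obtain C where C: "\<forall>ys. (\<forall>i<m. ys i \<in> short_segs b) \<longrightarrow> \<bar>g ys\<bar> \<le> C"
    using local_bounded_funD(2)[OF g] by blast
  have "AE ys in P m. \<bar>series_term k ys\<bar> \<le> C * growth ^ m * (inverse (fact k) * (growth * mass) ^ k)" for k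
    using AE_short_config[of m]
  proof eventually_elim
    case (elim ys)
    then have "\<And>i. i < m \<Longrightarrow> ys i \<in> short_segs b"
      by simp
    then show ?case
      by (rule abs_series_term_le[OF C])
  qed
  then have "\<bar>\<integral>ys. \<bar>series_term k ys\<bar> \<partial>P m\<bar> \<le> C * growth ^ m * (inverse (fact k) * (growth * mass) ^ k) * mass ^ m"
    for k using finite_measure.abs_integral_le_const_bound[OF finite_measure_P borel_measurable_abs[OF measurable_series_term]]
    by (simp add: measure_space_P)
  then show ?thesis
    by (intro summable_comparison_test'[OF summable_mult2[OF summable_mult[OF summable_exp[of "growth * mass"],
          of "C * growth ^ m"], of "mass ^ m"], of 0]) simp
qed

lemma sums_append_integral:
  "(\<lambda>k. append_integral k / fact k) sums (\<integral>ys. g ys * (\<Sum>k. 1 / fact k * calE_integral m ys k) \<partial>P m)"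
proof -
  obtain C where C: "\<forall>ys. (\<forall>i<m. ys i \<in> short_segs b) \<longrightarrow> \<bar>g ys\<bar> \<le> C"
    using local_bounded_funD(2)[OF g] by blast
  have "integrable (P m) (series_term k)" for k
  proof (rule integrable_P_if_bounded_on_short[OF measurable_series_term])
    fix ys assume "\<And>i. i < m \<Longrightarrow> ys i \<in> short_segs b"
    then show "\<bar>series_term k ys\<bar> \<le> C * growth ^ m * (inverse (fact k) * (growth * mass) ^ k)"
      by (rule abs_series_term_le[OF C])
  qed
  from sums_integral[OF this AE_summable_series_term summable_integral_series_term]
  have "(\<lambda>k. \<integral>ys. series_term k ys \<partial>P m) sums (\<integral>ys. (\<Sum>k. series_term k ys) \<partial>P m)" .
  moreover have "(\<integral>ys. series_term k ys \<partial>P m) = append_integral k / fact k" for k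
    unfolding series_term_def append_integral_eq by (simp add: mult.left_commute[of "g _"])
  moreover have "(\<integral>ys. (\<Sum>k. series_term k ys) \<partial>P m) = (\<integral>ys. g ys * (\<Sum>k. 1 / fact k * calE_integral m ys k) \<partial>P m)"
  proof (rule integral_cong_AE)
    show "(\<lambda>ys. \<Sum>k. series_term k ys) \<in> borel_measurable (P m)"
      using measurable_series_term by (rule borel_measurable_suminf)
    show "(\<lambda>ys. g ys * (\<Sum>k. 1 / fact k * calE_integral m ys k)) \<in> borel_measurable (P m)"
      by (intro borel_measurable_times local_bounded_funD(1)[OF g] borel_measurable_suminf borel_measurable_const
          measurable_calE_integral)
    show "AE ys in P m. (\<Sum>k. series_term k ys) = g ys * (\<Sum>k. 1 / fact k * calE_integral m ys k)"
      using AE_short_config[of m]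
    proof eventually_elim
      case (elim ys)
      then have "summable (\<lambda>k. \<bar>1 / fact k * calE_integral m ys k\<bar>)"
        by (intro summable_calE_integral) simp
      then show ?case
        unfolding series_term_def by (rule suminf_mult[OF summable_rabs_cancel])
    qed
  qed
  ultimately show ?thesis
    by simp
qed

lemma poisson_expect_sum_injections:
  "poisson_expect lam (\<lambda>n xs. (\<Sum>\<sigma>\<in>injections m n. g (\<lambda>i. xs (\<sigma> i))) * Gexp \<nu>1 \<nu>2 n xs) =
     (\<integral>ys. g ys * poisson_expect lam (\<lambda>n xs. calE \<nu>1 \<nu>2 n xs m ys * Gexp \<nu>1 \<nu>2 n xs) \<partial>P m)"
    and poisson_summable_sum_injections:
  "poisson_summable lam (\<lambda>n xs. (\<Sum>\<sigma>\<in>injections m n. g (\<lambda>i. xs (\<sigma> i))) * Gexp \<nu>1 \<nu>2 n xs)"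
proof -
  let ?a = "\<lambda>n. 1 / fact n * (\<integral>xs. (\<Sum>\<sigma>\<in>injections m n. g (\<lambda>i. xs (\<sigma> i))) * Gexp \<nu>1 \<nu>2 n xs \<partial>P n)"
  have "?a (k + m) = append_integral k / fact k" for k
    by (simp only: integral_sum_injections) simp
  then have "(\<lambda>n. ?a (n + m)) sums (\<integral>ys. g ys * (\<Sum>k. 1 / fact k * calE_integral m ys k) \<partial>P m)"
    using sums_append_integral by simp
  moreover have "(\<Sum>n<m. ?a n) = 0"
    by (simp only: integral_sum_injections) simp
  ultimately have a_sums: "?a sums (\<integral>ys. g ys * (\<Sum>k. 1 / fact k * calE_integral m ys k) \<partial>P m)"
    using sums_iff_shift[of ?a m] by simp
  have "poisson_expect lam (\<lambda>n xs. (\<Sum>\<sigma>\<in>injections m n. g (\<lambda>i. xs (\<sigma> i))) * Gexp \<nu>1 \<nu>2 n xs) =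
      exp (- mass) * (\<integral>ys. g ys * (\<Sum>k. 1 / fact k * calE_integral m ys k) \<partial>P m)"
    unfolding poisson_expect_def using sums_unique[OF a_sums] by simp
  also have "\<dots> = (\<integral>ys. exp (- mass) * (g ys * (\<Sum>k. 1 / fact k * calE_integral m ys k)) \<partial>P m)"
    by (rule integral_mult_right_zero[symmetric])
  also have "\<dots> = (\<integral>ys. g ys * poisson_expect lam (\<lambda>n xs. calE \<nu>1 \<nu>2 n xs m ys * Gexp \<nu>1 \<nu>2 n xs) \<partial>P m)"
    unfolding poisson_expect_calE by (simp only: mult.left_commute)
  finally show "poisson_expect lam (\<lambda>n xs. (\<Sum>\<sigma>\<in>injections m n. g (\<lambda>i. xs (\<sigma> i))) * Gexp \<nu>1 \<nu>2 n xs) =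
     (\<integral>ys. g ys * poisson_expect lam (\<lambda>n xs. calE \<nu>1 \<nu>2 n xs m ys * Gexp \<nu>1 \<nu>2 n xs) \<partial>P m)" .
  have "integrable (P n) (\<lambda>xs. (\<Sum>\<sigma>\<in>injections m n. g (\<lambda>i. xs (\<sigma> i))) * Gexp \<nu>1 \<nu>2 n xs)" for n
    unfolding sum_distrib_right
    by (intro Bochner_Integration.integrable_sum integrable_g_comp_Gexp) (auto simp: injections_def)
  with sums_summable[OF a_sums]
  show "poisson_summable lam (\<lambda>n xs. (\<Sum>\<sigma>\<in>injections m n. g (\<lambda>i. xs (\<sigma> i))) * Gexp \<nu>1 \<nu>2 n xs)"
    unfolding poisson_summable_def by blast
qed

lemma gibbs_expect_sum_injections:
  "gibbs_expect lam \<nu>1 \<nu>2 (\<lambda>n xs. \<Sum>\<sigma>\<in>injections m n. g (\<lambda>i. xs (\<sigma> i))) =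
    (\<integral>ys. gibbs_expect lam \<nu>1 \<nu>2 (\<lambda>n xs. calE \<nu>1 \<nu>2 n xs m ys) * g ys \<partial>P m)"
proof -
  let ?Z = "poisson_expect lam (Gexp \<nu>1 \<nu>2)"
  have "gibbs_expect lam \<nu>1 \<nu>2 (\<lambda>n xs. \<Sum>\<sigma>\<in>injections m n. g (\<lambda>i. xs (\<sigma> i))) =
      (\<integral>ys. g ys * poisson_expect lam (\<lambda>n xs. calE \<nu>1 \<nu>2 n xs m ys * Gexp \<nu>1 \<nu>2 n xs) \<partial>P m) / ?Z"
    unfolding gibbs_expect_def by (simp only: poisson_expect_sum_injections)
  also have "\<dots> = (\<integral>ys. g ys * poisson_expect lam (\<lambda>n xs. calE \<nu>1 \<nu>2 n xs m ys * Gexp \<nu>1 \<nu>2 n xs) / ?Z \<partial>P m)"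
    by (rule integral_divide_zero[symmetric])
  also have "\<dots> = (\<integral>ys. gibbs_expect lam \<nu>1 \<nu>2 (\<lambda>n xs. calE \<nu>1 \<nu>2 n xs m ys) * g ys \<partial>P m)"
    by (simp add: gibbs_expect_def mult.commute)
  finally show ?thesis .
qed

end

lemma measurable_gibbs_expect_calE:
  "(\<lambda>ys. gibbs_expect lam \<nu>1 \<nu>2 (\<lambda>n xs. calE \<nu>1 \<nu>2 n xs m ys)) \<in> borel_measurable (P m)"
  unfolding gibbs_expect_def
  by (intro borel_measurable_divide measurable_poisson_expect_calE borel_measurable_const)

lemma integral_P_1_gibbs_expect_calE:
  fixes f :: "segment \<Rightarrow> real"
  assumes "f \<in> borel_measurable lam"
  shows "(\<integral>ys. gibbs_expect lam \<nu>1 \<nu>2 (\<lambda>n xs. calE \<nu>1 \<nu>2 n xs 1 ys) * f (ys 0) \<partial>P 1) =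
    (\<integral>y. gibbs_expect lam \<nu>1 \<nu>2 (\<lambda>n xs. calE \<nu>1 \<nu>2 n xs 1 (\<lambda>_. y)) * f y \<partial>lam)"
proof -
  have calE_1: "calE \<nu>1 \<nu>2 n xs 1 ys = calE \<nu>1 \<nu>2 n xs 1 (\<lambda>_. ys 0)" for n xs and ys :: "nat \<Rightarrow> segment"
    by (rule calE_cong) auto
  have "(\<lambda>y. gibbs_expect lam \<nu>1 \<nu>2 (\<lambda>n xs. calE \<nu>1 \<nu>2 n xs 1 (\<lambda>i\<in>{..<1}. y))) \<in> borel_measurable lam"
    by (rule measurable_compose[OF measurable_restrict measurable_gibbs_expect_calE]) simp
  then have "(\<lambda>y. gibbs_expect lam \<nu>1 \<nu>2 (\<lambda>n xs. calE \<nu>1 \<nu>2 n xs 1 (\<lambda>_. y)) * f y) \<in> borel_measurable lam"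
    using assms by (subst (asm) calE_1) (simp add: borel_measurable_times)
  then show ?thesis
    by (subst calE_1) (rule integral_P_1)
qed

section \<open>First and second moments\<close>

lemma gibbs_expect_Lc:
  "gibbs_expect lam \<nu>1 \<nu>2 Lc = (\<integral>y. gibbs_expect lam \<nu>1 \<nu>2 (\<lambda>n xs. calE \<nu>1 \<nu>2 n xs 1 (\<lambda>_. y)) * len y \<partial>lam)"
proof -
  have "gibbs_expect lam \<nu>1 \<nu>2 Lc = gibbs_expect lam \<nu>1 \<nu>2 (\<lambda>n xs. \<Sum>\<sigma>\<in>injections 1 n. len (xs (\<sigma> 0)))"
    by (intro arg_cong[where f = "gibbs_expect lam \<nu>1 \<nu>2"] ext Lc_eq_sum_injections)
  also have "\<dots> = (\<integral>ys. gibbs_expect lam \<nu>1 \<nu>2 (\<lambda>n xs. calE \<nu>1 \<nu>2 n xs 1 ys) * len (ys 0) \<partial>P 1)"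
    by (rule gibbs_expect_sum_injections) (simp add: local_bounded_fun_len)
  also have "\<dots> = (\<integral>y. gibbs_expect lam \<nu>1 \<nu>2 (\<lambda>n xs. calE \<nu>1 \<nu>2 n xs 1 (\<lambda>_. y)) * len y \<partial>lam)"
    by (rule integral_P_1_gibbs_expect_calE[OF measurable_len[OF measurable_ident_sets[OF refl]]])
  finally show ?thesis .
qed

lemma gibbs_expect_Nc:
  "gibbs_expect lam \<nu>1 \<nu>2 Nc =
    1/2 * (\<integral>ys. gibbs_expect lam \<nu>1 \<nu>2 (\<lambda>n xs. calE \<nu>1 \<nu>2 n xs 2 ys) * ind (ys 0) (ys 1) \<partial>P 2)"
proof -
  have "gibbs_expect lam \<nu>1 \<nu>2 Nc =
      gibbs_expect lam \<nu>1 \<nu>2 (\<lambda>n xs. \<Sum>\<sigma>\<in>injections 2 n. 1/2 * ind (xs (\<sigma> 0)) (xs (\<sigma> 1)))"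
    by (intro arg_cong[where f = "gibbs_expect lam \<nu>1 \<nu>2"] ext Nc_eq_sum_injections)
  also have "\<dots> = (\<integral>ys. gibbs_expect lam \<nu>1 \<nu>2 (\<lambda>n xs. calE \<nu>1 \<nu>2 n xs 2 ys) * (1/2 * ind (ys 0) (ys 1)) \<partial>P 2)"
    by (rule gibbs_expect_sum_injections)
      (intro local_bounded_fun_mult local_bounded_fun_const local_bounded_fun_ind; simp)
  finally show ?thesis
    by simp
qed

lemma gibbs_expect_Lc_square:
  "gibbs_expect lam \<nu>1 \<nu>2 (\<lambda>n xs. (Lc n xs)\<^sup>2) =
     (\<integral>y. gibbs_expect lam \<nu>1 \<nu>2 (\<lambda>n xs. calE \<nu>1 \<nu>2 n xs 1 (\<lambda>_. y)) * (len y)\<^sup>2 \<partial>lam)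
   + (\<integral>ys. gibbs_expect lam \<nu>1 \<nu>2 (\<lambda>n xs. calE \<nu>1 \<nu>2 n xs 2 ys) * len (ys 0) * len (ys 1) \<partial>P 2)"
proof -
  have g1: "local_bounded_fun 1 (\<lambda>ys. (len (ys 0))\<^sup>2)"
    by (intro local_bounded_fun_power local_bounded_fun_len) simp
  have g2: "local_bounded_fun 2 (\<lambda>ys. len (ys 0) * len (ys 1))"
    by (intro local_bounded_fun_mult local_bounded_fun_len) simp_all
  have "gibbs_expect lam \<nu>1 \<nu>2 (\<lambda>n xs. (Lc n xs)\<^sup>2) = gibbs_expect lam \<nu>1 \<nu>2
      (\<lambda>n xs. (\<Sum>\<sigma>\<in>injections 1 n. (len (xs (\<sigma> 0)))\<^sup>2) + (\<Sum>\<sigma>\<in>injections 2 n. len (xs (\<sigma> 0)) * len (xs (\<sigma> 1))))"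
    by (intro arg_cong[where f = "gibbs_expect lam \<nu>1 \<nu>2"] ext Lc_square_eq_sum_injections)
  also have "\<dots> = gibbs_expect lam \<nu>1 \<nu>2 (\<lambda>n xs. \<Sum>\<sigma>\<in>injections 1 n. (len (xs (\<sigma> 0)))\<^sup>2)
      + gibbs_expect lam \<nu>1 \<nu>2 (\<lambda>n xs. \<Sum>\<sigma>\<in>injections 2 n. len (xs (\<sigma> 0)) * len (xs (\<sigma> 1)))"
    using gibbs_expect_add(1)[OF poisson_summable_sum_injections[OF g1] poisson_summable_sum_injections[OF g2]]
    by simp
  also have "\<dots> = (\<integral>ys. gibbs_expect lam \<nu>1 \<nu>2 (\<lambda>n xs. calE \<nu>1 \<nu>2 n xs 1 ys) * (len (ys 0))\<^sup>2 \<partial>P 1)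
      + (\<integral>ys. gibbs_expect lam \<nu>1 \<nu>2 (\<lambda>n xs. calE \<nu>1 \<nu>2 n xs 2 ys) * (len (ys 0) * len (ys 1)) \<partial>P 2)"
    using gibbs_expect_sum_injections[OF g1] gibbs_expect_sum_injections[OF g2] by simp
  also have "(\<integral>ys. gibbs_expect lam \<nu>1 \<nu>2 (\<lambda>n xs. calE \<nu>1 \<nu>2 n xs 1 ys) * (len (ys 0))\<^sup>2 \<partial>P 1) =
      (\<integral>y. gibbs_expect lam \<nu>1 \<nu>2 (\<lambda>n xs. calE \<nu>1 \<nu>2 n xs 1 (\<lambda>_. y)) * (len y)\<^sup>2 \<partial>lam)"
    by (rule integral_P_1_gibbs_expect_calE[where f = "\<lambda>y. (len y)\<^sup>2"])
      (intro borel_measurable_power measurable_len measurable_ident_sets refl)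
  finally show ?thesis
    by (simp add: mult.assoc)
qed

lemma gibbs_expect_Nc_square:
  "gibbs_expect lam \<nu>1 \<nu>2 (\<lambda>n xs. (Nc n xs)\<^sup>2) =
       1/2 * (\<integral>ys. gibbs_expect lam \<nu>1 \<nu>2 (\<lambda>n xs. calE \<nu>1 \<nu>2 n xs 2 ys) * ind (ys 0) (ys 1) \<partial>P 2)
     + (\<integral>ys. gibbs_expect lam \<nu>1 \<nu>2 (\<lambda>n xs. calE \<nu>1 \<nu>2 n xs 3 ys) * ind (ys 0) (ys 1) * ind (ys 2) (ys 0) \<partial>P 3)
     + 1/4 * (\<integral>ys. gibbs_expect lam \<nu>1 \<nu>2 (\<lambda>n xs. calE \<nu>1 \<nu>2 n xs 4 ys) * ind (ys 0) (ys 1) * ind (ys 2) (ys 3) \<partial>P 4)"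
proof -
  let ?g2 = "\<lambda>ys :: nat \<Rightarrow> segment. 1/2 * ind (ys 0) (ys 1)"
    and ?g3 = "\<lambda>ys :: nat \<Rightarrow> segment. ind (ys 0) (ys 1) * ind (ys 2) (ys 0)"
    and ?g4 = "\<lambda>ys :: nat \<Rightarrow> segment. 1/4 * (ind (ys 0) (ys 1) * ind (ys 2) (ys 3))"
  have g: "local_bounded_fun 2 ?g2" "local_bounded_fun 3 ?g3" "local_bounded_fun 4 ?g4"
    by (intro local_bounded_fun_mult local_bounded_fun_const local_bounded_fun_ind; simp)+
  note summable = poisson_summable_sum_injections[OF g(1)] poisson_summable_sum_injections[OF g(2)]
    poisson_summable_sum_injections[OF g(3)]
  have "gibbs_expect lam \<nu>1 \<nu>2 (\<lambda>n xs. (Nc n xs)\<^sup>2) = gibbs_expect lam \<nu>1 \<nu>2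
      (\<lambda>n xs. (\<Sum>\<sigma>\<in>injections 2 n. ?g2 (\<lambda>i. xs (\<sigma> i))) + (\<Sum>\<sigma>\<in>injections 3 n. ?g3 (\<lambda>i. xs (\<sigma> i)))
        + (\<Sum>\<sigma>\<in>injections 4 n. ?g4 (\<lambda>i. xs (\<sigma> i))))"
    by (intro arg_cong[where f = "gibbs_expect lam \<nu>1 \<nu>2"] ext Nc_square_eq_sum_injections)
  also have "\<dots> = gibbs_expect lam \<nu>1 \<nu>2 (\<lambda>n xs. \<Sum>\<sigma>\<in>injections 2 n. ?g2 (\<lambda>i. xs (\<sigma> i)))
      + gibbs_expect lam \<nu>1 \<nu>2 (\<lambda>n xs. \<Sum>\<sigma>\<in>injections 3 n. ?g3 (\<lambda>i. xs (\<sigma> i)))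
      + gibbs_expect lam \<nu>1 \<nu>2 (\<lambda>n xs. \<Sum>\<sigma>\<in>injections 4 n. ?g4 (\<lambda>i. xs (\<sigma> i)))"
    by (simp only: gibbs_expect_add(1)[OF gibbs_expect_add(2)[OF summable(1,2)] summable(3)]
        gibbs_expect_add(1)[OF summable(1,2)])
  also have "\<dots> = (\<integral>ys. gibbs_expect lam \<nu>1 \<nu>2 (\<lambda>n xs. calE \<nu>1 \<nu>2 n xs 2 ys) * ?g2 ys \<partial>P 2)
      + (\<integral>ys. gibbs_expect lam \<nu>1 \<nu>2 (\<lambda>n xs. calE \<nu>1 \<nu>2 n xs 3 ys) * ?g3 ys \<partial>P 3)
      + (\<integral>ys. gibbs_expect lam \<nu>1 \<nu>2 (\<lambda>n xs. calE \<nu>1 \<nu>2 n xs 4 ys) * ?g4 ys \<partial>P 4)"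
    by (simp only: gibbs_expect_sum_injections[OF g(1)] gibbs_expect_sum_injections[OF g(2)]
        gibbs_expect_sum_injections[OF g(3)])
  finally show ?thesis
    by (simp add: mult.assoc)
qed

end

section \<open>The intensity measure of the segment process\<close>

lemma sets_intensity:
  assumes "sets Q = sets borel" "sets V = sets borel"
  shows "sets (intensity B b \<rho> Q V) = sets borel"
proof -
  have "sets (lborel \<Otimes>\<^sub>M (Q \<Otimes>\<^sub>M V)) =
      sets ((borel :: (real \<times> real) measure) \<Otimes>\<^sub>M ((borel :: real measure) \<Otimes>\<^sub>M (borel :: real measure)))"
    using assms by (intro sets_pair_measure_cong) simp_all
  also have "\<dots> = sets (borel :: segment measure)"
    by (simp only: borel_prod)
  finally show ?thesis
    by (simp add: intensity_def)
qed

lemma borel_measurable_intensity_density: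
  assumes "B \<in> sets lborel" "\<rho> \<in> borel_measurable borel" "sets Q = sets borel" "sets V = sets borel"
  shows "(\<lambda>y. indicator (segY B b) y * ennreal (\<rho> (fst y))) \<in> borel_measurable (lborel \<Otimes>\<^sub>M (Q \<Otimes>\<^sub>M V))"
proof -
  have "segY B b \<in> sets (lborel \<Otimes>\<^sub>M (Q \<Otimes>\<^sub>M V))"
    unfolding segY_def using assms by (intro pair_measureI) auto
  then show ?thesis
    using assms(2) by (intro borel_measurable_times_ennreal borel_measurable_indicator
        measurable_compose[OF measurable_fst] measurable_compose[OF _ measurable_ennreal]) simp_all
qed

lemma AE_intensity_short:
  assumes "B \<in> sets lborel" "\<rho> \<in> borel_measurable borel" "sets Q = sets borel" "sets V = sets borel"
  shows "AE y in intensity B b \<rho> Q V. y \<in> short_segs b"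
  unfolding intensity_def AE_density[OF borel_measurable_intensity_density[OF assms]]
  by (rule AE_I2) (auto simp: segY_def short_segs_def len_def indicator_def)

lemma finite_measure_intensity:
  assumes B: "B \<in> sets lborel" "bounded B"
    and \<rho>: "\<rho> \<in> borel_measurable borel" "\<exists>C. \<forall>z\<in>B. \<rho> z \<le> C"
    and Q: "prob_space Q" "sets Q = sets borel"
    and V: "prob_space V" "sets V = sets borel"
  shows "finite_measure (intensity B b \<rho> Q V)"
proof (rule finite_measureI)
  let ?M = "lborel \<Otimes>\<^sub>M (Q \<Otimes>\<^sub>M V)" and ?f = "\<lambda>y. indicator (segY B b) y * ennreal (\<rho> (fst y))"
  interpret QV: prob_space "Q \<Otimes>\<^sub>M V"
    using Q(1) V(1) by (rule prob_space_pair)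
  obtain C where C: "\<forall>z\<in>B. \<rho> z \<le> C" "0 \<le> C"
    using \<rho>(2) by (metis max.cobounded1 max.coboundedI2)
  have f: "?f \<in> borel_measurable ?M"
    using B(1) \<rho>(1) Q(2) V(2) by (rule borel_measurable_intensity_density)
  have "emeasure (intensity B b \<rho> Q V) (space (intensity B b \<rho> Q V)) =
      (\<integral>\<^sup>+ y. ?f y * indicator (space ?M) y \<partial>?M)"
    unfolding intensity_def space_density by (rule emeasure_density[OF f sets.top])
  also have "\<dots> \<le> (\<integral>\<^sup>+ y. ennreal C * indicator (B \<times> space (Q \<Otimes>\<^sub>M V)) y \<partial>?M)"
    using C by (intro nn_integral_mono) (auto simp: segY_def indicator_def space_pair_measure
        sets_eq_imp_space_eq[OF Q(2)] sets_eq_imp_space_eq[OF V(2)] intro: ennreal_leI)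
  also have "\<dots> = ennreal C * (emeasure lborel B * emeasure (Q \<Otimes>\<^sub>M V) (space (Q \<Otimes>\<^sub>M V)))"
    using B(1) by (simp add: nn_integral_cmult_indicator QV.emeasure_pair_measure_Times pair_measureI)
  also have "\<dots> < \<infinity>"
    using emeasure_bounded_finite[OF B(2)] by (simp add: ennreal_mult_less_top QV.emeasure_space_1)
  finally show "emeasure (intensity B b \<rho> Q V) (space (intensity B b \<rho> Q V)) \<noteq> \<infinity>"
    by simp
qed

lemma segment_gibbs_intensity:
  assumes "B \<in> sets lborel" "bounded B"
    and "\<rho> \<in> borel_measurable borel" "\<exists>C. \<forall>z\<in>B. \<rho> z \<le> C"
    and "prob_space Q" "sets Q = sets borel"
    and "prob_space V" "sets V = sets borel"
    and "\<nu>2 \<le> 0"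
  shows "segment_gibbs (intensity B b \<rho> Q V) b \<nu>2"
  unfolding segment_gibbs_def segment_gibbs_axioms_def segment_intensity_def
  using finite_measure_intensity[OF assms(1-8)] sets_intensity[OF assms(6,8)]
    AE_intensity_short[OF assms(1,3,6,8)] assms(9)
  by blast

theorem corollary2:
  fixes B :: "(real \<times> real) set" and b :: real and \<rho> :: "real \<times> real \<Rightarrow> real"
    and Q V :: "real measure" and \<nu>1 \<nu>2 :: real
  assumes B: "B \<in> sets lborel" "bounded B" "emeasure lborel B > 0"
    and b: "b > 0"
    and \<rho>: "\<rho> \<in> borel_measurable borel" "\<And>z. \<rho> z \<ge> 0" "\<exists>C. \<forall>z\<in>B. \<rho> z \<le> C"
    and Q: "prob_space Q" "sets Q = sets borel" "emeasure Q {0<..b} = 1"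
    and V: "prob_space V" "sets V = sets borel" "emeasure V {0..<pi} = 1"
    and V_nondeg: "\<And>a. emeasure V {a} < 1"
    and \<nu>2: "\<nu>2 \<le> 0"
  defines "lam \<equiv> intensity B b \<rho> Q V"
  defines "EE \<equiv> gibbs_expect lam \<nu>1 \<nu>2"
  defines "lamn \<equiv> (\<lambda>m. PiM {..<m} (\<lambda>_. lam))"
  shows
    "EE Lc = (\<integral>y. EE (\<lambda>n xs. calE \<nu>1 \<nu>2 n xs 1 (\<lambda>_. y)) * len y \<partial>lam) \<and>
     EE Nc = 1/2 * (\<integral>ys. EE (\<lambda>n xs. calE \<nu>1 \<nu>2 n xs 2 ys) * ind (ys 0) (ys 1) \<partial>lamn 2) \<and>
     EE (\<lambda>n xs. (Lc n xs)\<^sup>2) =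
       (\<integral>y. EE (\<lambda>n xs. calE \<nu>1 \<nu>2 n xs 1 (\<lambda>_. y)) * (len y)\<^sup>2 \<partial>lam)
     + (\<integral>ys. EE (\<lambda>n xs. calE \<nu>1 \<nu>2 n xs 2 ys) * len (ys 0) * len (ys 1) \<partial>lamn 2) \<and>
     EE (\<lambda>n xs. (Nc n xs)\<^sup>2) =
       1/2 * (\<integral>ys. EE (\<lambda>n xs. calE \<nu>1 \<nu>2 n xs 2 ys) * ind (ys 0) (ys 1) \<partial>lamn 2)
     + (\<integral>ys. EE (\<lambda>n xs. calE \<nu>1 \<nu>2 n xs 3 ys) * ind (ys 0) (ys 1) * ind (ys 2) (ys 0) \<partial>lamn 3)
     + 1/4 * (\<integral>ys. EE (\<lambda>n xs. calE \<nu>1 \<nu>2 n xs 4 ys) * ind (ys 0) (ys 1) * ind (ys 2) (ys 3) \<partial>lamn 4)"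
proof -
  interpret segment_gibbs lam b \<nu>1 \<nu>2
    unfolding lam_def using B(1,2) \<rho>(1,3) Q(1,2) V(1,2) \<nu>2 by (rule segment_gibbs_intensity)
  show ?thesis
    unfolding EE_def lamn_def
    by (intro conjI gibbs_expect_Lc gibbs_expect_Nc gibbs_expect_Lc_square gibbs_expect_Nc_square)
qed

end
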